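(* Let $(\Delta,\delta)$ be a building of type $(W,S)$ and let $G$ be a group acting on $\Delta$ by type-preserving automorphisms such that the action is Weyl-transitive. Let $a$ and $b$ be two simplices with residues $\mathcal{A}$ and $\mathcal{B}$ respectively. Then: (1) the stabilizer $G_b$ acts transitively on the set of simplices of the same type as $a$ whose residues $\mathcal{R}$ satisfy $\min\delta(\mathcal{B},\mathcal{R})=\min\delta(\mathcal{B},\mathcal{A})$; (2) the subgroup $G_a\cap G_b$ acts transitively on $\operatorname{proj}_{\mathcal{A}}(\mathcal{B})$, on $\operatorname{proj}_{\mathcal{B}}(\mathcal{A})$, and on the set of ordered pairs $(x,y)\in\operatorname{proj}_{\mathcal{A}}(\mathcal{B})\times\operatorname{proj}_{\mathcal{B}}(\mathcal{A})$ with $\delta(x,y)=\min\delta(\mathcal{A},\mathcal{B})$.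
   Context: A building of type $(W,S)$ ($S$ finite, $\ell$ the length function) is a set $\Delta$ of chambers with a Weyl distance $\delta:\Delta\times\Delta\to W$ satisfying the standard axioms. For $J\subseteq S$ let $W_J=\langle J\rangle$; $J$ is spherical if $W_J$ is finite. The $J$-residue of a chamber $x$ is $R_J(x)=\{y\in\Delta:\delta(x,y)\in W_J\}$. The building is viewed as a simplicial complex whose simplices are the spherical residues (ordered by reverse inclusion; chambers are the maximal simplices); the simplex corresponding to a residue of type $J$ has cotype $J$, and simplices have the same type iff they have the same cotype. An automorphism is type-preserving if $\delta(gx,gy)=\delta(x,y)$ for all chambers $x,y$. A group $G$ of such automorphisms is Weyl-transitive if for all chambers $x,y,x',y'$ with $\delta(x,y)=\delta(x',y')$ there is $g\in G$ with $g.x=x'$, $g.y=y'$. $G_b$ denotes the stabilizer of the simplex $b$. For a residue $\mathcal{R}$ and a chamber $x$, $\operatorname{proj}_{\mathcal{R}}(x)$ is the unique chamber of $\mathcal{R}$ at minimal gallery distance from $x$; for residues $\mathcal{A},\mathcal{B}$, $\operatorname{proj}_{\mathcal{B}}(\mathcal{A})=\{\operatorname{proj}_{\mathcal{B}}(x):x\in\mathcal{A}\}$. The set $\delta(\mathcal{A},\mathcal{B})=\{\delta(x,y):x\in\mathcal{A},y\in\mathcal{B}\}$ has a unique element of minimal length, denoted $\min\delta(\mathcal{A},\mathcal{B})$. *)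

theory Defs
  imports "HOL-Algebra.Algebra"
begin

definition word_prod :: "('w, 'm) monoid_scheme \<Rightarrow> 'w list \<Rightarrow> 'w" where
  "word_prod W ws = foldr (\<lambda>s w. s \<otimes>\<^bsub>W\<^esub> w) ws \<one>\<^bsub>W\<^esub>"

definition wlen :: "('w, 'm) monoid_scheme \<Rightarrow> 'w set \<Rightarrow> 'w \<Rightarrow> nat" where
  "wlen W S w = (LEAST n. \<exists>ws. length ws = n \<and> set ws \<subseteq> S \<and> word_prod W ws = w)"

text \<open>Coxeter system, via the (Matsumoto) exchange-condition characterisation.\<close>
definition coxeter_system :: "('w, 'm) monoid_scheme \<Rightarrow> 'w set \<Rightarrow> bool" where
  "coxeter_system W S \<longleftrightarrow> group W \<and> finite S \<and> S \<subseteq> carrier W \<and> \<one>\<^bsub>W\<^esub> \<notin> S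
    \<and> (\<forall>s\<in>S. s \<otimes>\<^bsub>W\<^esub> s = \<one>\<^bsub>W\<^esub>)
    \<and> generate W S = carrier W
    \<and> (\<forall>s\<in>S. \<forall>ws. set ws \<subseteq> S \<longrightarrow> length ws = wlen W S (word_prod W ws)
          \<longrightarrow> wlen W S (s \<otimes>\<^bsub>W\<^esub> word_prod W ws) \<le> wlen W S (word_prod W ws)
          \<longrightarrow> (\<exists>i<length ws. s \<otimes>\<^bsub>W\<^esub> word_prod W ws = word_prod W (take i ws @ drop (Suc i) ws)))"

definition building :: "('w, 'm) monoid_scheme \<Rightarrow> 'w set \<Rightarrow> 'c set \<Rightarrow> ('c \<Rightarrow> 'c \<Rightarrow> 'w) \<Rightarrow> bool" where
  "building W S \<Delta> \<delta> \<longleftrightarrow> coxeter_system W S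
    \<and> (\<forall>x\<in>\<Delta>. \<forall>y\<in>\<Delta>. \<delta> x y \<in> carrier W)
    \<and> (\<forall>x\<in>\<Delta>. \<forall>y\<in>\<Delta>. \<delta> x y = \<one>\<^bsub>W\<^esub> \<longleftrightarrow> x = y)
    \<and> (\<forall>x\<in>\<Delta>. \<forall>y\<in>\<Delta>. \<forall>x'\<in>\<Delta>. \<forall>s\<in>S. \<delta> x' x = s \<longrightarrow>
          (\<delta> x' y = s \<otimes>\<^bsub>W\<^esub> \<delta> x y \<or> \<delta> x' y = \<delta> x y)
          \<and> (wlen W S (s \<otimes>\<^bsub>W\<^esub> \<delta> x y) = wlen W S (\<delta> x y) + 1
               \<longrightarrow> \<delta> x' y = s \<otimes>\<^bsub>W\<^esub> \<delta> x y))
    \<and> (\<forall>x\<in>\<Delta>. \<forall>y\<in>\<Delta>. \<forall>s\<in>S. \<exists>x'\<in>\<Delta>. \<delta> x' x = s \<and> \<delta> x' y = s \<otimes>\<^bsub>W\<^esub> \<delta> x y)"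

definition residue :: "('w, 'm) monoid_scheme \<Rightarrow> 'c set \<Rightarrow> ('c \<Rightarrow> 'c \<Rightarrow> 'w) \<Rightarrow> 'w set \<Rightarrow> 'c \<Rightarrow> 'c set" where
  "residue W \<Delta> \<delta> J x = {y \<in> \<Delta>. \<delta> x y \<in> generate W J}"

text \<open>A simplex of cotype J, identified with its (spherical) residue of type J.\<close>
definition simplex_of_type :: "('w, 'm) monoid_scheme \<Rightarrow> 'w set \<Rightarrow> 'c set \<Rightarrow> ('c \<Rightarrow> 'c \<Rightarrow> 'w)
    \<Rightarrow> 'w set \<Rightarrow> 'c set \<Rightarrow> bool" where
  "simplex_of_type W S \<Delta> \<delta> J R \<longleftrightarrow> J \<subseteq> S \<and> finite (generate W J) \<and> (\<exists>x\<in>\<Delta>. R = residue W \<Delta> \<delta> J x)"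

definition gdist :: "'w set \<Rightarrow> 'c set \<Rightarrow> ('c \<Rightarrow> 'c \<Rightarrow> 'w) \<Rightarrow> 'c \<Rightarrow> 'c \<Rightarrow> nat" where
  "gdist S \<Delta> \<delta> x y = (LEAST n. \<exists>xs. length xs = Suc n \<and> hd xs = x \<and> last xs = y \<and> set xs \<subseteq> \<Delta>
       \<and> (\<forall>i<n. \<delta> (xs ! i) (xs ! Suc i) \<in> S))"

definition proj :: "'w set \<Rightarrow> 'c set \<Rightarrow> ('c \<Rightarrow> 'c \<Rightarrow> 'w) \<Rightarrow> 'c set \<Rightarrow> 'c \<Rightarrow> 'c" where
  "proj S \<Delta> \<delta> R x = (THE y. y \<in> R \<and> (\<forall>z\<in>R. gdist S \<Delta> \<delta> x y \<le> gdist S \<Delta> \<delta> x z))"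

definition proj_set :: "'w set \<Rightarrow> 'c set \<Rightarrow> ('c \<Rightarrow> 'c \<Rightarrow> 'w) \<Rightarrow> 'c set \<Rightarrow> 'c set \<Rightarrow> 'c set" where
  "proj_set S \<Delta> \<delta> B A = proj S \<Delta> \<delta> B ` A"

definition min_delta :: "('w, 'm) monoid_scheme \<Rightarrow> 'w set \<Rightarrow> ('c \<Rightarrow> 'c \<Rightarrow> 'w) \<Rightarrow> 'c set \<Rightarrow> 'c set \<Rightarrow> 'w" where
  "min_delta W S \<delta> A B = (THE w. w \<in> {\<delta> x y |x y. x \<in> A \<and> y \<in> B}
      \<and> (\<forall>v\<in>{\<delta> x y |x y. x \<in> A \<and> y \<in> B}. wlen W S w \<le> wlen W S v))"

definition type_preserving :: "('g, 'n) monoid_scheme \<Rightarrow> 'c set \<Rightarrow> ('c \<Rightarrow> 'c \<Rightarrow> 'w) \<Rightarrow> ('g \<Rightarrow> 'c \<Rightarrow> 'c) \<Rightarrow> bool" where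
  "type_preserving G \<Delta> \<delta> \<phi> \<longleftrightarrow> (\<forall>g\<in>carrier G. \<forall>x\<in>\<Delta>. \<forall>y\<in>\<Delta>. \<delta> (\<phi> g x) (\<phi> g y) = \<delta> x y)"

definition weyl_transitive :: "('g, 'n) monoid_scheme \<Rightarrow> 'c set \<Rightarrow> ('c \<Rightarrow> 'c \<Rightarrow> 'w) \<Rightarrow> ('g \<Rightarrow> 'c \<Rightarrow> 'c) \<Rightarrow> bool" where
  "weyl_transitive G \<Delta> \<delta> \<phi> \<longleftrightarrow> (\<forall>x\<in>\<Delta>. \<forall>y\<in>\<Delta>. \<forall>x'\<in>\<Delta>. \<forall>y'\<in>\<Delta>.
      \<delta> x y = \<delta> x' y' \<longrightarrow> (\<exists>g\<in>carrier G. \<phi> g x = x' \<and> \<phi> g y = y'))"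

definition simplex_stab :: "('g, 'n) monoid_scheme \<Rightarrow> ('g \<Rightarrow> 'c \<Rightarrow> 'c) \<Rightarrow> 'c set \<Rightarrow> 'g set" where
  "simplex_stab G \<phi> R = {g \<in> carrier G. \<phi> g ` R = R}"

definition acts_transitively_on :: "'g set \<Rightarrow> ('g \<Rightarrow> 'x \<Rightarrow> 'x) \<Rightarrow> 'x set \<Rightarrow> bool" where
  "acts_transitively_on Hs f Xs \<longleftrightarrow> (\<forall>h\<in>Hs. \<forall>u\<in>Xs. f h u \<in> Xs) \<and> (\<forall>u\<in>Xs. \<forall>v\<in>Xs. \<exists>h\<in>Hs. f h u = v)"

end

theory Submission
  imports Defs
begin

(*
  For x \<in> A and y \<in> B the Weyl distances \<delta>(A,B) form a double coset W_J w W_K, and its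
  shortest element is the only one that is minimal both in its left W_J-coset and in its right
  W_K-coset. The gate property of residues shows that for every b \<in> B the pair
  x = proj_A b, y = proj_B x has exactly such a doubly minimal distance, so \<delta>(x,y) = min \<delta>(A,B).
  Thus any two points of proj_A(B), and any two pairs in the last set, sit in pairs at the same
  Weyl distance; Weyl-transitivity gives g \<in> G carrying one pair to the other, and g stabilises
  A and B because it maps a chamber of each residue into that residue. For (1), every residue R
  of the given type contains a chamber r at distance min \<delta>(B,R) from some b \<in> B, and an element
  carrying (b,r) to (b',r') stabilises B and maps R onto R'.
*)

section \<open>Coxeter groups\<close>

lemma append_eq_append_Cons_cases:
  assumes "xs @ ys = as @ z # bs"
  obtains (in_right) c d where "ys = c @ z # d" "as = xs @ c" "bs = d"
    | (in_left) a c where "xs = a @ z # c" "as = a" "bs = c @ ys"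
proof -
  obtain m where "xs = as @ m \<and> m @ ys = z # bs \<or> xs @ m = as \<and> ys = m @ z # bs"
    using assms by (auto simp: append_eq_append_conv2)
  then show thesis
  proof
    assume m: "xs = as @ m \<and> m @ ys = z # bs"
    show thesis
    proof (cases m)
      case Nil
      then show thesis using m in_right[of "[]" bs] by simp
    next
      case (Cons y ys')
      then show thesis using m in_left by auto
    qed
  qed (use in_right in auto)
qed

locale coxeter_group = group W for W :: "('w, 'm) monoid_scheme" (structure) +
  fixes S :: "'w set"
  assumes coxeter_system: "coxeter_system W S"
begin

abbreviation len :: "'w \<Rightarrow> nat" where "len \<equiv> wlen W S"
abbreviation wprod :: "'w list \<Rightarrow> 'w" where "wprod \<equiv> word_prod W"
abbreviation reduced :: "'w list \<Rightarrow> bool" where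
  "reduced ws \<equiv> set ws \<subseteq> S \<and> length ws = len (wprod ws)"

lemma gens_subset_carrier: "S \<subseteq> carrier W"
  and one_notin_gens: "\<one> \<notin> S"
  and gen_square: "s \<in> S \<Longrightarrow> s \<otimes> s = \<one>"
  and generate_gens: "generate W S = carrier W"
  using coxeter_system unfolding coxeter_system_def by auto

lemma exchange_condition:
  "s \<in> S \<Longrightarrow> reduced ws \<Longrightarrow> len (s \<otimes> wprod ws) \<le> len (wprod ws)
    \<Longrightarrow> \<exists>i<length ws. s \<otimes> wprod ws = wprod (take i ws @ drop (Suc i) ws)"
  using coxeter_system unfolding coxeter_system_def by blast

lemma gen_closed: "s \<in> S \<Longrightarrow> s \<in> carrier W"
  using gens_subset_carrier by auto

lemma inv_gen: "s \<in> S \<Longrightarrow> inv s = s"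
  using gen_square gen_closed by (simp add: inv_equality)

lemma wprod_Nil [simp]: "wprod [] = \<one>"
  by (simp add: word_prod_def)

lemma wprod_Cons [simp]: "wprod (s # ws) = s \<otimes> wprod ws"
  by (simp add: word_prod_def)

lemma wprod_closed: "set ws \<subseteq> S \<Longrightarrow> wprod ws \<in> carrier W"
  by (induct ws) (auto intro: gen_closed)

lemma wprod_append: "set ws \<subseteq> S \<Longrightarrow> set vs \<subseteq> S \<Longrightarrow> wprod (ws @ vs) = wprod ws \<otimes> wprod vs"
  by (induct ws) (auto simp: m_assoc wprod_closed gen_closed)

lemma wprod_rev: "set ws \<subseteq> S \<Longrightarrow> wprod (rev ws) = inv (wprod ws)"
  by (induct ws) (simp_all add: wprod_append inv_mult_group wprod_closed gen_closed inv_gen)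

lemma generate_subgroup: "J \<subseteq> S \<Longrightarrow> subgroup (generate W J) W"
  using generate_is_subgroup gens_subset_carrier by blast

lemma generate_closed: "J \<subseteq> S \<Longrightarrow> u \<in> generate W J \<Longrightarrow> u \<in> carrier W"
  using generate_incl gens_subset_carrier by blast

lemma generate_inv: "J \<subseteq> S \<Longrightarrow> u \<in> generate W J \<Longrightarrow> inv u \<in> generate W J"
  using subgroup.m_inv_closed[OF generate_subgroup] by blast

lemma generate_mult:
  "J \<subseteq> S \<Longrightarrow> u \<in> generate W J \<Longrightarrow> v \<in> generate W J \<Longrightarrow> u \<otimes> v \<in> generate W J"
  using subgroup.m_closed[OF generate_subgroup] by blast

lemma wprod_in_generate: "J \<subseteq> S \<Longrightarrow> set ws \<subseteq> J \<Longrightarrow> wprod ws \<in> generate W J"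
  by (induct ws) (auto intro: generate.one generate.eng generate.incl)

lemma word_in_generate:
  assumes "J \<subseteq> S" "x \<in> generate W J"
  shows "\<exists>ws. set ws \<subseteq> J \<and> wprod ws = x"
  using assms(2)
proof (induct x rule: generate.induct)
  case one
  show ?case by (rule exI[of _ "[]"]) simp
next
  case (incl h)
  then show ?case using assms gen_closed[of h] by (intro exI[of _ "[h]"]) auto
next
  case (inv h)
  then show ?case using assms gen_closed[of h] inv_gen[of h] by (intro exI[of _ "[h]"]) auto
next
  case (eng h1 h2)
  then obtain ws vs where "set ws \<subseteq> J" "wprod ws = h1" "set vs \<subseteq> J" "wprod vs = h2" by blast
  then show ?case using assms by (intro exI[of _ "ws @ vs"]) (auto simp: wprod_append)
qed

lemma len_le_length: "set ws \<subseteq> S \<Longrightarrow> len (wprod ws) \<le> length ws"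
  unfolding wlen_def by (rule Least_le) blast

lemma reduced_word_exists:
  assumes "w \<in> carrier W"
  shows "\<exists>ws. set ws \<subseteq> S \<and> wprod ws = w \<and> length ws = len w"
proof -
  obtain ws where "set ws \<subseteq> S" "wprod ws = w"
    using word_in_generate[of S w] generate_gens assms by auto
  then have "\<exists>n ws. length ws = n \<and> set ws \<subseteq> S \<and> wprod ws = w" by blast
  then have "\<exists>ws. length ws = len w \<and> set ws \<subseteq> S \<and> wprod ws = w"
    unfolding wlen_def by (rule LeastI_ex)
  then show ?thesis by blast
qed

lemma len_inv [simp]: "w \<in> carrier W \<Longrightarrow> len (inv w) = len w"
proof -
  have le: "len (inv v) \<le> len v" if "v \<in> carrier W" for v
    by (metis that reduced_word_exists len_le_length length_rev set_rev wprod_rev)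
  assume "w \<in> carrier W"
  then show ?thesis using le[of w] le[of "inv w"] by simp
qed

lemma len_inv_mult: "a \<in> carrier W \<Longrightarrow> b \<in> carrier W \<Longrightarrow> len (inv b \<otimes> inv a) = len (a \<otimes> b)"
  by (metis inv_mult_group len_inv m_closed)

lemma len_mult_le: "a \<in> carrier W \<Longrightarrow> b \<in> carrier W \<Longrightarrow> len (a \<otimes> b) \<le> len a + len b"
  by (metis reduced_word_exists len_le_length length_append set_append le_sup_iff wprod_append)

lemma len_eq_0_iff: "w \<in> carrier W \<Longrightarrow> len w = 0 \<longleftrightarrow> w = \<one>"
  using reduced_word_exists[of w] len_le_length[of "[]"] by fastforce

lemma len_gen: "s \<in> S \<Longrightarrow> len s = 1"
  using len_le_length[of "[s]"] len_eq_0_iff[of s] one_notin_gens gen_closed[of s] by fastforce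

lemma len_gen_mult_le: "s \<in> S \<Longrightarrow> w \<in> carrier W \<Longrightarrow> len (s \<otimes> w) \<le> len w + 1"
  using len_mult_le[of s w] len_gen gen_closed by simp

lemma len_mult_gen_le: "s \<in> S \<Longrightarrow> w \<in> carrier W \<Longrightarrow> len (w \<otimes> s) \<le> len w + 1"
  using len_mult_le[of w s] len_gen gen_closed by simp

lemma reduced_appendD: "reduced (as @ bs) \<Longrightarrow> reduced as \<and> reduced bs"
  using len_mult_le[of "wprod as" "wprod bs"] len_le_length[of as] len_le_length[of bs]
  by (auto simp: wprod_append wprod_closed)

lemma exchange:
  assumes "s \<in> S" "reduced ws" "len (s \<otimes> wprod ws) \<le> len (wprod ws)"
  shows "\<exists>as z bs. ws = as @ z # bs \<and> s \<otimes> wprod ws = wprod (as @ bs)"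
proof -
  obtain i where i: "i < length ws" "s \<otimes> wprod ws = wprod (take i ws @ drop (Suc i) ws)"
    using exchange_condition assms by blast
  then have "ws = take i ws @ ws ! i # drop (Suc i) ws" by (simp add: id_take_nth_drop)
  then show ?thesis using i by blast
qed

lemma exchange_right:
  assumes s: "s \<in> S" and ws: "reduced ws" and le: "len (wprod ws \<otimes> s) \<le> len (wprod ws)"
  shows "\<exists>as z bs. ws = as @ z # bs \<and> wprod ws \<otimes> s = wprod (as @ bs)"
proof -
  have c: "wprod ws \<in> carrier W" "s \<in> carrier W" using ws s wprod_closed gen_closed by auto
  have inv_eq: "s \<otimes> wprod (rev ws) = inv (wprod ws \<otimes> s)"
    using ws s c by (simp add: wprod_rev inv_mult_group inv_gen)
  have "reduced (rev ws)" using ws c by (simp add: wprod_rev)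
  moreover have "len (s \<otimes> wprod (rev ws)) \<le> len (wprod (rev ws))"
    using inv_eq le ws c by (simp add: wprod_rev)
  ultimately obtain as z bs where e: "rev ws = as @ z # bs" "s \<otimes> wprod (rev ws) = wprod (as @ bs)"
    using exchange[OF s] by blast
  then have ws_eq: "ws = rev bs @ z # rev as" by (metis rev_append rev_rev_ident rev.simps(2) append_assoc append_Cons append_Nil)
  then have "set as \<subseteq> S" "set bs \<subseteq> S" using ws by auto
  then have "wprod ws \<otimes> s = wprod (rev bs @ rev as)"
    using e inv_eq c wprod_rev[of "as @ bs"] by (metis inv_inv m_closed rev_append set_append le_sup_iff)
  then show ?thesis using ws_eq by blast
qed

lemma deletion_condition:
  "set ws \<subseteq> S \<Longrightarrow> len (wprod ws) < length ws \<Longrightarrow>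
    \<exists>ws'. set ws' \<subseteq> set ws \<and> length ws' < length ws \<and> wprod ws' = wprod ws"
proof (induct ws)
  case Nil
  then show ?case by simp
next
  case (Cons s ws)
  show ?case
  proof (cases "len (wprod ws) < length ws")
    case True
    then obtain ws' where "set ws' \<subseteq> set ws" "length ws' < length ws" "wprod ws' = wprod ws"
      using Cons by auto
    then show ?thesis by (intro exI[of _ "s # ws'"]) auto
  next
    case False
    then have "reduced ws" using len_le_length Cons by fastforce
    moreover have "len (s \<otimes> wprod ws) \<le> len (wprod ws)" using Cons calculation by simp
    ultimately obtain as z bs where "ws = as @ z # bs" "s \<otimes> wprod ws = wprod (as @ bs)"
      using exchange[of s ws] Cons by auto
    then show ?thesis by (intro exI[of _ "as @ bs"]) auto
  qed
qed

lemma reduced_word_in_generate: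
  assumes J: "J \<subseteq> S" and u: "u \<in> generate W J"
  shows "\<exists>ws. set ws \<subseteq> J \<and> wprod ws = u \<and> length ws = len u"
proof -
  let ?P = "\<lambda>ws. set ws \<subseteq> J \<and> wprod ws = u"
  obtain ws0 where "?P ws0" using word_in_generate J u by blast
  then obtain ws where ws: "?P ws" and shortest: "\<And>ws'. ?P ws' \<Longrightarrow> length ws \<le> length ws'"
    using ex_has_least_nat[of ?P ws0 length] by blast
  have "len u \<le> length ws" using len_le_length[of ws] ws J by auto
  moreover have "\<not> len u < length ws"
  proof
    assume "len u < length ws"
    then obtain ws' where "set ws' \<subseteq> set ws" "length ws' < length ws" "wprod ws' = wprod ws"
      using deletion_condition[of ws] ws J by auto
    then show False using shortest[of ws'] ws by auto
  qed
  ultimately show ?thesis using ws by auto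
qed

lemma exchange_product_left:
  assumes J: "J \<subseteq> S" and s: "s \<in> S" and a: "a \<in> carrier W" and b: "b \<in> generate W J"
    and add: "len (a \<otimes> b) = len a + len b" and le: "len (s \<otimes> (a \<otimes> b)) \<le> len (a \<otimes> b)"
  shows "len (s \<otimes> a) < len a \<or> (\<exists>b'\<in>generate W J. s \<otimes> (a \<otimes> b) = a \<otimes> b')"
proof -
  obtain as where as: "set as \<subseteq> S" "wprod as = a" "length as = len a"
    using reduced_word_exists a by blast
  obtain bs where bs: "set bs \<subseteq> J" "wprod bs = b" "length bs = len b"
    using reduced_word_in_generate J b by blast
  have bsS: "set bs \<subseteq> S" using bs J by auto
  have prod: "wprod (as @ bs) = a \<otimes> b" using as bs bsS by (simp add: wprod_append)
  have "reduced (as @ bs)" using as bsS bs add prod by simp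
  then obtain pre z post where split: "as @ bs = pre @ z # post"
    and del: "s \<otimes> (a \<otimes> b) = wprod (pre @ post)"
    using exchange[OF s] le prod by metis
  from split show ?thesis
  proof (cases rule: append_eq_append_Cons_cases)
    case (in_right c d)
    then have "s \<otimes> (a \<otimes> b) = a \<otimes> wprod (c @ d)" using del as bsS by (simp add: wprod_append)
    moreover have "wprod (c @ d) \<in> generate W J" using in_right bs J by (intro wprod_in_generate) auto
    ultimately show ?thesis by blast
  next
    case (in_left p c)
    have pcS: "set (p @ c) \<subseteq> S" using in_left as by auto
    have "s \<otimes> a \<otimes> b = wprod (p @ c) \<otimes> b"
      using del in_left pcS bs bsS as s by (auto simp: wprod_append wprod_closed m_assoc gen_closed)
    then have "s \<otimes> a = wprod (p @ c)"
      using pcS bsS bs s a by (simp add: wprod_closed gen_closed generate_closed[OF J b])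
    then have "len (s \<otimes> a) < len a" using len_le_length[OF pcS] in_left as by simp
    then show ?thesis ..
  qed
qed

lemma exchange_product_right:
  assumes t: "t \<in> S" and a: "a \<in> carrier W" and b: "b \<in> carrier W"
    and add: "len (a \<otimes> b) = len a + len b" and le: "len (a \<otimes> b \<otimes> t) \<le> len (a \<otimes> b)"
  shows "len (b \<otimes> t) < len b \<or> (\<exists>a'\<in>carrier W. a \<otimes> b \<otimes> t = a' \<otimes> b \<and> len a' < len a)"
proof -
  obtain as where as: "set as \<subseteq> S" "wprod as = a" "length as = len a"
    using reduced_word_exists a by blast
  obtain bs where bs: "set bs \<subseteq> S" "wprod bs = b" "length bs = len b"
    using reduced_word_exists b by blast
  have prod: "wprod (as @ bs) = a \<otimes> b" using as bs by (simp add: wprod_append)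
  have "reduced (as @ bs)" using as bs add prod by simp
  then obtain pre z post where split: "as @ bs = pre @ z # post"
    and del: "a \<otimes> b \<otimes> t = wprod (pre @ post)"
    using exchange_right[OF t] le prod by metis
  from split show ?thesis
  proof (cases rule: append_eq_append_Cons_cases)
    case (in_right c d)
    have cdS: "set (c @ d) \<subseteq> S" using in_right bs by auto
    have "a \<otimes> (b \<otimes> t) = a \<otimes> wprod (c @ d)"
      using del in_right as cdS t a b by (simp add: wprod_append m_assoc gen_closed)
    then have "b \<otimes> t = wprod (c @ d)" using cdS t a b by (simp add: wprod_closed gen_closed)
    then have "len (b \<otimes> t) < len b" using len_le_length[OF cdS] in_right bs by simp
    then show ?thesis ..
  next
    case (in_left p c)
    have pcS: "set (p @ c) \<subseteq> S" using in_left as by auto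
    have "a \<otimes> b \<otimes> t = wprod (p @ c) \<otimes> b" using del in_left pcS bs by (auto simp: wprod_append wprod_closed m_assoc)
    moreover have "len (wprod (p @ c)) < len a" using len_le_length[OF pcS] in_left as by simp
    ultimately show ?thesis using wprod_closed[OF pcS] by blast
  qed
qed

subsection \<open>Minimal coset representatives\<close>

definition minimal_in_right_coset :: "'w set \<Rightarrow> 'w \<Rightarrow> bool" where
  "minimal_in_right_coset J w \<longleftrightarrow> (\<forall>u\<in>generate W J. len w \<le> len (w \<otimes> u))"

definition minimal_in_left_coset :: "'w set \<Rightarrow> 'w \<Rightarrow> bool" where
  "minimal_in_left_coset J w \<longleftrightarrow> (\<forall>v\<in>generate W J. len w \<le> len (v \<otimes> w))"

lemma minimal_in_left_coset_iff_inv: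
  assumes J: "J \<subseteq> S" and w: "w \<in> carrier W"
  shows "minimal_in_left_coset J w \<longleftrightarrow> minimal_in_right_coset J (inv w)"
proof -
  have len_swap: "len (v \<otimes> w) = len (inv w \<otimes> inv v)" if "v \<in> generate W J" for v
  proof -
    have "v \<in> carrier W" using that generate_closed[OF J] by blast
    then show ?thesis using w by (simp add: len_inv_mult)
  qed
  show ?thesis
    unfolding minimal_in_left_coset_def minimal_in_right_coset_def
  proof
    assume L: "\<forall>v\<in>generate W J. len w \<le> len (v \<otimes> w)"
    show "\<forall>u\<in>generate W J. len (inv w) \<le> len (inv w \<otimes> u)"
    proof
      fix u assume u: "u \<in> generate W J"
      then have iu: "inv u \<in> generate W J" and uc: "u \<in> carrier W"
        using generate_inv generate_closed J by auto
      then have "len w \<le> len (inv u \<otimes> w)" using L by blast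
      then show "len (inv w) \<le> len (inv w \<otimes> u)" using len_swap[OF iu] w uc by simp
    qed
  next
    assume R: "\<forall>u\<in>generate W J. len (inv w) \<le> len (inv w \<otimes> u)"
    show "\<forall>v\<in>generate W J. len w \<le> len (v \<otimes> w)"
    proof
      fix v assume v: "v \<in> generate W J"
      then have "len (inv w) \<le> len (inv w \<otimes> inv v)" using R generate_inv[OF J] by blast
      then show "len w \<le> len (v \<otimes> w)" using len_swap[OF v] w by simp
    qed
  qed
qed

lemma minimal_in_right_coset_len_mult_step:
  assumes J: "J \<subseteq> S" and w: "w \<in> carrier W" and min: "minimal_in_right_coset J w"
    and x: "x \<in> generate W J" and t: "t \<in> J"
    and wx: "len (w \<otimes> x) = len w + len x" and xt: "len (x \<otimes> t) = len x + 1"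
  shows "len (w \<otimes> x \<otimes> t) = len (w \<otimes> x) + 1"
proof -
  have tS: "t \<in> S" using t J by auto
  have xc: "x \<in> carrier W" and tc: "t \<in> carrier W" using generate_closed[OF J x] gen_closed[OF tS] .
  have "\<not> len (w \<otimes> x \<otimes> t) \<le> len (w \<otimes> x)"
  proof
    assume "len (w \<otimes> x \<otimes> t) \<le> len (w \<otimes> x)"
    then obtain a' where a': "a' \<in> carrier W" "w \<otimes> x \<otimes> t = a' \<otimes> x" "len a' < len w"
      using exchange_product_right[OF tS w xc wx] xt by auto
    have "x \<otimes> t \<otimes> inv x \<in> generate W J"
      using x generate.incl[OF t] J by (intro generate_mult generate_inv)
    moreover have "a' = w \<otimes> (x \<otimes> t \<otimes> inv x)"
    proof -
      have "a' = a' \<otimes> x \<otimes> inv x" using a'(1) xc by (simp add: m_assoc)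
      also have "\<dots> = w \<otimes> x \<otimes> t \<otimes> inv x" using a'(2) by simp
      also have "\<dots> = w \<otimes> (x \<otimes> t \<otimes> inv x)" using w xc tc by (simp add: m_assoc)
      finally show ?thesis .
    qed
    ultimately show False using min a'(3) unfolding minimal_in_right_coset_def by fastforce
  qed
  then show ?thesis using len_mult_gen_le[OF tS, of "w \<otimes> x"] w xc by simp
qed

lemma minimal_in_right_coset_len_mult:
  assumes J: "J \<subseteq> S" and w: "w \<in> carrier W" and min: "minimal_in_right_coset J w"
    and u: "u \<in> generate W J"
  shows "len (w \<otimes> u) = len w + len u"
proof -
  have "len (w \<otimes> wprod us) = len w + length us" if "set us \<subseteq> J" "reduced us" for us
    using that
  proof (induct us rule: rev_induct)
    case Nil
    then show ?case using w by simp
  next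
    case (snoc t us)
    have usS: "set us \<subseteq> S" and tJ: "t \<in> J" and tS: "t \<in> S" using snoc(2) J by auto
    have us: "reduced us" using reduced_appendD[of us "[t]"] snoc(3) by blast
    have xt: "wprod (us @ [t]) = wprod us \<otimes> t" using usS tS by (simp add: wprod_append gen_closed)
    have "len (w \<otimes> wprod us \<otimes> t) = len (w \<otimes> wprod us) + 1"
      using minimal_in_right_coset_len_mult_step[OF J w min wprod_in_generate[OF J] tJ] snoc us xt by simp
    then show ?case using snoc us xt w wprod_closed[OF usS] gen_closed[OF tS] by (simp add: m_assoc)
  qed
  moreover obtain us where "set us \<subseteq> J" "wprod us = u" "length us = len u"
    using reduced_word_in_generate[OF J u] by blast
  ultimately show ?thesis using J by fastforce
qed

lemma minimal_in_left_coset_len_mult: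
  assumes J: "J \<subseteq> S" and w: "w \<in> carrier W" and min: "minimal_in_left_coset J w"
    and v: "v \<in> generate W J"
  shows "len (v \<otimes> w) = len v + len w"
proof -
  have vc: "v \<in> carrier W" using generate_closed J v by blast
  have "len (v \<otimes> w) = len (inv w \<otimes> inv v)" using vc w by (simp add: len_inv_mult)
  also have "\<dots> = len (inv w) + len (inv v)"
    using min minimal_in_left_coset_iff_inv[OF J w] generate_inv[OF J v] w
    by (intro minimal_in_right_coset_len_mult[OF J]) auto
  finally show ?thesis using vc w by simp
qed

lemma minimal_in_left_coset_prefix:
  assumes J: "J \<subseteq> S" and a: "a \<in> carrier W" and b: "b \<in> carrier W"
    and add: "len (a \<otimes> b) = len a + len b" and min: "minimal_in_left_coset J (a \<otimes> b)"
  shows "minimal_in_left_coset J a"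
  unfolding minimal_in_left_coset_def
proof
  fix v assume v: "v \<in> generate W J"
  then have vc: "v \<in> carrier W" using generate_closed J by blast
  have "len (a \<otimes> b) \<le> len (v \<otimes> a \<otimes> b)" using min v a b vc unfolding minimal_in_left_coset_def by (simp add: m_assoc)
  also have "\<dots> \<le> len (v \<otimes> a) + len b" using len_mult_le vc a b by simp
  finally show "len a \<le> len (v \<otimes> a)" using add by simp
qed

lemma double_coset_minimal_step:
  assumes K: "K \<subseteq> S" and J: "J \<subseteq> S" and x: "x \<in> carrier W" and y: "y \<in> carrier W"
    and x_min: "minimal_in_left_coset K x"
    and y_min: "minimal_in_left_coset K y" "minimal_in_right_coset J y"
    and s: "s \<in> K" and v: "v \<in> generate W K" and sv: "len (s \<otimes> v) = Suc (len v)"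
    and u: "u \<in> generate W J" and y_eq: "y = s \<otimes> v \<otimes> x \<otimes> u"
  shows "\<exists>u'\<in>generate W J. y = v \<otimes> x \<otimes> u'"
proof -
  have sS: "s \<in> S" using s K by auto
  (* Exchange in a reduced word for y \<otimes> inv u = s \<otimes> v \<otimes> x: deleting a letter of y would
     shorten s \<otimes> y, so the deleted letter lies in the W_J-part. *)
  have sc: "s \<in> carrier W" and vc: "v \<in> carrier W" and uc: "u \<in> carrier W"
    using gen_closed[OF sS] generate_closed K J v u by auto
  have svK: "s \<otimes> v \<in> generate W K" using generate_mult[OF K generate.incl[OF s] v] .
  have y_div: "y \<otimes> inv u = s \<otimes> (v \<otimes> x)" using y_eq sc vc x uc by (simp add: m_assoc)
  have v_eq: "s \<otimes> (y \<otimes> inv u) = v \<otimes> x"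
    using y_div sc vc x gen_square[OF sS] by (simp add: m_assoc[symmetric])
  have add: "len (y \<otimes> inv u) = len y + len (inv u)"
    using minimal_in_right_coset_len_mult[OF J y y_min(2) generate_inv[OF J u]] .
  have "len (s \<otimes> (v \<otimes> x)) = len (s \<otimes> v \<otimes> x)" using sc vc x by (simp add: m_assoc)
  also have "\<dots> = Suc (len (v \<otimes> x))"
    using minimal_in_left_coset_len_mult[OF K x x_min] svK v sv by simp
  finally have "len (s \<otimes> (y \<otimes> inv u)) \<le> len (y \<otimes> inv u)" using y_div v_eq by simp
  then consider "len (s \<otimes> y) < len y" | b' where "b' \<in> generate W J" "v \<otimes> x = y \<otimes> b'"
    using exchange_product_left[OF J sS y generate_inv[OF J u] add] unfolding v_eq by blast
  then show ?thesis
  proof cases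
    case 1
    moreover have "len y \<le> len (s \<otimes> y)"
      using y_min(1) generate.incl[OF s] unfolding minimal_in_left_coset_def by blast
    ultimately show ?thesis by simp
  next
    case 2
    have "b' \<in> carrier W" using generate_closed J 2(1) by blast
    then have "y = v \<otimes> x \<otimes> inv b'" using 2(2) y vc x by (simp add: m_assoc)
    then show ?thesis using generate_inv[OF J 2(1)] by blast
  qed
qed

lemma double_coset_minimal_eq:
  assumes K: "K \<subseteq> S" and J: "J \<subseteq> S" and x: "x \<in> carrier W" and y: "y \<in> carrier W"
    and x_min: "minimal_in_left_coset K x" "minimal_in_right_coset J x"
    and y_min: "minimal_in_left_coset K y" "minimal_in_right_coset J y"
    and v: "v \<in> generate W K" and u: "u \<in> generate W J" and y_eq: "y = v \<otimes> x \<otimes> u"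
  shows "y = x"
proof -
  have "y = x" if "set vs \<subseteq> K" "reduced vs" "u \<in> generate W J" "y = wprod vs \<otimes> x \<otimes> u" for vs u
    using that
  proof (induct vs arbitrary: u)
    case Nil
    then have uc: "u \<in> carrier W" and y_xu: "y = x \<otimes> u" using generate_closed J x by auto
    have "len y = len x + len u" using minimal_in_right_coset_len_mult[OF J x x_min(2) Nil(3)] y_xu by simp
    moreover have "x = y \<otimes> inv u" using y_xu x uc by (simp add: m_assoc)
    then have "len x = len y + len u"
      using minimal_in_right_coset_len_mult[OF J y y_min(2) generate_inv[OF J Nil(3)]] uc by simp
    ultimately have "u = \<one>" using len_eq_0_iff uc by simp
    then show ?case using y_xu x by simp
  next
    case (Cons s vs)
    have s: "s \<in> K" and vsK: "set vs \<subseteq> K" using Cons(2) by auto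
    have "reduced ([s] @ vs)" using Cons(3) by simp
    then have vs_red: "reduced vs" using reduced_appendD by blast
    have "len (s \<otimes> wprod vs) = Suc (len (wprod vs))" using Cons(3) vs_red by simp
    moreover have "y = s \<otimes> wprod vs \<otimes> x \<otimes> u" using Cons(5) by simp
    ultimately obtain u' where "u' \<in> generate W J" "y = wprod vs \<otimes> x \<otimes> u'"
      using double_coset_minimal_step[OF K J x y x_min(1) y_min s wprod_in_generate[OF K vsK]] Cons(4)
      by blast
    then show ?case using Cons(1) vsK vs_red by blast
  qed
  moreover obtain vs where "set vs \<subseteq> K" "wprod vs = v" "length vs = len v"
    using reduced_word_in_generate[OF K v] by blast
  ultimately show ?thesis using u y_eq K by blast
qed

end

section \<open>Buildings\<close>

fun gallery :: "'c set \<Rightarrow> ('c \<Rightarrow> 'c \<Rightarrow> 'w) \<Rightarrow> 'c \<Rightarrow> 'w list \<Rightarrow> 'c \<Rightarrow> bool" where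
  "gallery D d x [] y \<longleftrightarrow> x = y"
| "gallery D d x (t # ts) y \<longleftrightarrow> (\<exists>x'\<in>D. d x x' = t \<and> gallery D d x' ts y)"

locale W_building = coxeter_group W S for W :: "('w, 'm) monoid_scheme" (structure) and S +
  fixes \<Delta> :: "'c set" and \<delta> :: "'c \<Rightarrow> 'c \<Rightarrow> 'w"
  assumes building: "building W S \<Delta> \<delta>"
begin

lemma delta_closed: "x \<in> \<Delta> \<Longrightarrow> y \<in> \<Delta> \<Longrightarrow> \<delta> x y \<in> carrier W"
  and delta_eq_one_iff: "x \<in> \<Delta> \<Longrightarrow> y \<in> \<Delta> \<Longrightarrow> \<delta> x y = \<one> \<longleftrightarrow> x = y"
  and delta_adjacent_cases: "x \<in> \<Delta> \<Longrightarrow> y \<in> \<Delta> \<Longrightarrow> x' \<in> \<Delta> \<Longrightarrow> s \<in> S \<Longrightarrow> \<delta> x' x = s \<Longrightarrow>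
    \<delta> x' y = s \<otimes> \<delta> x y \<or> \<delta> x' y = \<delta> x y"
  and delta_adjacent_longer: "x \<in> \<Delta> \<Longrightarrow> y \<in> \<Delta> \<Longrightarrow> x' \<in> \<Delta> \<Longrightarrow> s \<in> S \<Longrightarrow> \<delta> x' x = s \<Longrightarrow>
    len (s \<otimes> \<delta> x y) = len (\<delta> x y) + 1 \<Longrightarrow> \<delta> x' y = s \<otimes> \<delta> x y"
  and delta_adjacent_exists: "x \<in> \<Delta> \<Longrightarrow> y \<in> \<Delta> \<Longrightarrow> s \<in> S \<Longrightarrow>
    \<exists>x'\<in>\<Delta>. \<delta> x' x = s \<and> \<delta> x' y = s \<otimes> \<delta> x y"
  using building unfolding building_def by blast+

lemma delta_self [simp]: "x \<in> \<Delta> \<Longrightarrow> \<delta> x x = \<one>"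
  using delta_eq_one_iff by blast

lemma adjacent_sym:
  assumes x: "x \<in> \<Delta>" and x': "x' \<in> \<Delta>" and s: "s \<in> S" and adj: "\<delta> x' x = s"
  shows "\<delta> x x' = s"
  using delta_adjacent_cases[OF x x' x' s adj]
proof
  assume "\<delta> x' x' = s \<otimes> \<delta> x x'"
  then have "s \<otimes> \<delta> x x' = \<one>" using x' by simp
  then have "s \<otimes> (s \<otimes> \<delta> x x') = s" using gen_closed[OF s] by simp
  then show ?thesis using gen_square[OF s] gen_closed[OF s] delta_closed[OF x x'] by (simp add: m_assoc[symmetric])
next
  assume "\<delta> x' x' = \<delta> x x'"
  then have "\<delta> x x' = \<one>" using x' by simp
  then have "x = x'" using x x' delta_eq_one_iff by blast
  then show ?thesis using adj x s one_notin_gens by simp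
qed

lemma gallery_in: "gallery \<Delta> \<delta> x ws y \<Longrightarrow> x \<in> \<Delta> \<Longrightarrow> y \<in> \<Delta>"
  by (induct ws arbitrary: x) auto

lemma gallery_append: "gallery \<Delta> \<delta> x (as @ bs) y \<longleftrightarrow> (\<exists>z. gallery \<Delta> \<delta> x as z \<and> gallery \<Delta> \<delta> z bs y)"
  by (induct as arbitrary: x) auto

lemma gallery_exists:
  "set ws \<subseteq> S \<Longrightarrow> x \<in> \<Delta> \<Longrightarrow> y \<in> \<Delta> \<Longrightarrow> \<delta> x y = wprod ws \<Longrightarrow> gallery \<Delta> \<delta> x ws y"
proof (induct ws arbitrary: x)
  case Nil
  then show ?case using delta_eq_one_iff by simp
next
  case (Cons t ts)
  then obtain x' where x': "x' \<in> \<Delta>" "\<delta> x' x = t" "\<delta> x' y = t \<otimes> \<delta> x y"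
    using delta_adjacent_exists[of x y t] by auto
  have "\<delta> x' y = wprod ts"
    using x' Cons gen_square[of t] gen_closed[of t] wprod_closed[of ts] by (simp add: m_assoc[symmetric])
  moreover have "\<delta> x x' = t" using adjacent_sym x' Cons by auto
  ultimately show ?case using Cons x' by auto
qed

lemma gallery_rev: "set ws \<subseteq> S \<Longrightarrow> x \<in> \<Delta> \<Longrightarrow> gallery \<Delta> \<delta> x ws y \<Longrightarrow> gallery \<Delta> \<delta> y (rev ws) x"
proof (induct ws arbitrary: x)
  case Nil
  then show ?case by simp
next
  case (Cons t ts)
  then obtain x' where x': "x' \<in> \<Delta>" "\<delta> x x' = t" "gallery \<Delta> \<delta> x' ts y" by auto
  have "gallery \<Delta> \<delta> y (rev ts) x'" using Cons x' by auto
  moreover have "gallery \<Delta> \<delta> x' [t] x" using adjacent_sym[of x' x t] x' Cons by auto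
  ultimately show ?case by (auto simp: gallery_append)
qed

lemma delta_reduced_gallery: "reduced ws \<Longrightarrow> x \<in> \<Delta> \<Longrightarrow> gallery \<Delta> \<delta> x ws y \<Longrightarrow> \<delta> x y = wprod ws"
proof (induct ws arbitrary: x)
  case Nil
  then show ?case by simp
next
  case (Cons t ts)
  then obtain x' where x': "x' \<in> \<Delta>" "\<delta> x x' = t" "gallery \<Delta> \<delta> x' ts y" by auto
  have "reduced ([t] @ ts)" using Cons(2) by simp
  then have ts: "reduced ts" using reduced_appendD by blast
  have y: "y \<in> \<Delta>" using gallery_in x' by blast
  have "\<delta> x' y = wprod ts" using Cons ts x' by blast
  moreover have "len (t \<otimes> wprod ts) = len (wprod ts) + 1" using Cons(2) ts by simp
  ultimately show ?case using delta_adjacent_longer[OF x'(1) y Cons(3), of t] Cons x' by simp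
qed

lemma delta_swap: assumes x: "x \<in> \<Delta>" and y: "y \<in> \<Delta>" shows "\<delta> y x = inv (\<delta> x y)"
proof -
  obtain ws where ws: "set ws \<subseteq> S" "wprod ws = \<delta> x y" "length ws = len (\<delta> x y)"
    using reduced_word_exists delta_closed x y by blast
  have "gallery \<Delta> \<delta> x ws y" using gallery_exists[OF ws(1) x y ws(2)[symmetric]] .
  then have g: "gallery \<Delta> \<delta> y (rev ws) x" using gallery_rev[OF ws(1) x] by blast
  have e: "wprod (rev ws) = inv (\<delta> x y)" using wprod_rev[OF ws(1)] ws(2) by simp
  then have "reduced (rev ws)" using ws delta_closed[OF x y] by simp
  then have "\<delta> y x = wprod (rev ws)" using delta_reduced_gallery g y by blast
  then show ?thesis using e by simp
qed

lemma inv_gen_mult_delta: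
  assumes x: "x \<in> \<Delta>" and y: "y \<in> \<Delta>" and t: "t \<in> S"
  shows "inv (t \<otimes> \<delta> y x) = \<delta> x y \<otimes> t"
proof -
  have "inv (t \<otimes> \<delta> y x) = inv (\<delta> y x) \<otimes> t"
    using delta_closed[OF y x] gen_closed[OF t] inv_gen[OF t] by (simp add: inv_mult_group)
  then show ?thesis using delta_swap[OF x y] delta_closed[OF x y] by simp
qed

lemma delta_adjacent_right_cases:
  assumes c: "c \<in> \<Delta>" and y: "y \<in> \<Delta>" and y': "y' \<in> \<Delta>" and t: "t \<in> S" and adj: "\<delta> y y' = t"
  shows "\<delta> c y' = \<delta> c y \<otimes> t \<or> \<delta> c y' = \<delta> c y"
proof -
  have "\<delta> y' c = t \<otimes> \<delta> y c \<or> \<delta> y' c = \<delta> y c"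
    using delta_adjacent_cases[OF y c y' t adjacent_sym[OF y' y t adj]] .
  moreover have "inv (\<delta> y c) = \<delta> c y" using delta_swap[OF c y] delta_closed[OF c y] by simp
  ultimately show ?thesis using delta_swap[OF y' c] inv_gen_mult_delta[OF c y t] by auto
qed

lemma delta_adjacent_right_longer:
  assumes c: "c \<in> \<Delta>" and y: "y \<in> \<Delta>" and y': "y' \<in> \<Delta>" and t: "t \<in> S" and adj: "\<delta> y y' = t"
    and longer: "len (\<delta> c y \<otimes> t) = len (\<delta> c y) + 1"
  shows "\<delta> c y' = \<delta> c y \<otimes> t"
proof -
  have "len (t \<otimes> \<delta> y c) = len (inv (t \<otimes> \<delta> y c))"
    using delta_closed[OF y c] gen_closed[OF t] by simp
  also have "\<dots> = len (\<delta> y c) + 1"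
    using longer inv_gen_mult_delta[OF c y t] delta_swap[OF c y] delta_closed[OF c y] by simp
  finally have "\<delta> y' c = t \<otimes> \<delta> y c"
    using delta_adjacent_longer[OF y c y' t adjacent_sym[OF y' y t adj]] by blast
  then show ?thesis using delta_swap[OF y' c] inv_gen_mult_delta[OF c y t] by simp
qed

lemma delta_adjacent_right_exists:
  assumes c: "c \<in> \<Delta>" and y: "y \<in> \<Delta>" and t: "t \<in> S"
  shows "\<exists>y'\<in>\<Delta>. \<delta> y y' = t \<and> \<delta> c y' = \<delta> c y \<otimes> t"
proof -
  obtain y' where y': "y' \<in> \<Delta>" "\<delta> y' y = t" "\<delta> y' c = t \<otimes> \<delta> y c"
    using delta_adjacent_exists[OF y c t] by blast
  then have "\<delta> c y' = \<delta> c y \<otimes> t" using delta_swap[OF y'(1) c] inv_gen_mult_delta[OF c y t] by simp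
  then show ?thesis using y' adjacent_sym[OF y _ t] by blast
qed

lemma chamber_path_of_gallery:
  "set ws \<subseteq> S \<Longrightarrow> x \<in> \<Delta> \<Longrightarrow> gallery \<Delta> \<delta> x ws y \<Longrightarrow>
    \<exists>xs. length xs = Suc (length ws) \<and> hd xs = x \<and> last xs = y \<and> set xs \<subseteq> \<Delta>
      \<and> (\<forall>i<length ws. \<delta> (xs ! i) (xs ! Suc i) \<in> S)"
proof (induct ws arbitrary: x)
  case Nil
  then show ?case by (intro exI[of _ "[x]"]) simp
next
  case (Cons t ts)
  then obtain x' where x': "x' \<in> \<Delta>" "\<delta> x x' = t" "gallery \<Delta> \<delta> x' ts y" by auto
  obtain xs where xs: "length xs = Suc (length ts)" "hd xs = x'" "last xs = y" "set xs \<subseteq> \<Delta>"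
    "\<forall>i<length ts. \<delta> (xs ! i) (xs ! Suc i) \<in> S"
    using Cons(1)[OF _ x'(1) x'(3)] Cons(2) by auto
  have "xs ! 0 = x'" using xs by (cases xs) auto
  then have "\<forall>i<length (t # ts). \<delta> ((x # xs) ! i) ((x # xs) ! Suc i) \<in> S"
    using xs x' Cons(2) by (auto simp: less_Suc_eq_0_disj)
  then show ?case using xs Cons x' by (intro exI[of _ "x # xs"]) auto
qed

lemma len_delta_le_chamber_path:
  "length xs = Suc n \<Longrightarrow> hd xs = x \<Longrightarrow> last xs = y \<Longrightarrow> set xs \<subseteq> \<Delta>
    \<Longrightarrow> \<forall>i<n. \<delta> (xs ! i) (xs ! Suc i) \<in> S \<Longrightarrow> len (\<delta> x y) \<le> n"
proof (induct n arbitrary: xs x)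
  case 0
  then obtain a where "xs = [a]" by (cases xs) auto
  then show ?case using 0 len_eq_0_iff by auto
next
  case (Suc n)
  then obtain x1 xs' where xs: "xs = x # x1 # xs'" by (metis hd_Cons_tl length_Suc_conv list.sel(1))
  have "y \<in> set xs" using Suc(4) xs last_in_set by blast
  then have x1: "x1 \<in> \<Delta>" "x \<in> \<Delta>" "y \<in> \<Delta>" using Suc(3,5) xs by auto
  have "\<forall>i<n. \<delta> ((x1 # xs') ! i) ((x1 # xs') ! Suc i) \<in> S" using Suc(6) xs by auto
  then have IH: "len (\<delta> x1 y) \<le> n" using Suc(1)[of "x1 # xs'" x1] Suc(2-5) xs by auto
  have s: "\<delta> x x1 \<in> S" using Suc(6) xs by force
  have "\<delta> x y = \<delta> x x1 \<otimes> \<delta> x1 y \<or> \<delta> x y = \<delta> x1 y"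
    using delta_adjacent_cases[OF x1(1) x1(3) x1(2) s refl] .
  moreover have "len (\<delta> x x1 \<otimes> \<delta> x1 y) \<le> len (\<delta> x1 y) + 1"
    using len_gen_mult_le[OF s delta_closed[OF x1(1) x1(3)]] .
  ultimately show ?case using IH by auto
qed

lemma gdist_eq_len_delta:
  assumes x: "x \<in> \<Delta>" and y: "y \<in> \<Delta>"
  shows "gdist S \<Delta> \<delta> x y = len (\<delta> x y)"
proof -
  let ?P = "\<lambda>n. \<exists>xs. length xs = Suc n \<and> hd xs = x \<and> last xs = y \<and> set xs \<subseteq> \<Delta>
       \<and> (\<forall>i<n. \<delta> (xs ! i) (xs ! Suc i) \<in> S)"
  obtain ws where ws: "set ws \<subseteq> S" "wprod ws = \<delta> x y" "length ws = len (\<delta> x y)"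
    using reduced_word_exists delta_closed x y by blast
  then have "gallery \<Delta> \<delta> x ws y" using gallery_exists x y by simp
  then have "?P (len (\<delta> x y))" using chamber_path_of_gallery[OF ws(1) x] ws(3) by metis
  moreover have "len (\<delta> x y) \<le> n" if "?P n" for n using that len_delta_le_chamber_path by blast
  ultimately show ?thesis unfolding gdist_def by (intro Least_equality) auto
qed

subsection \<open>Residues and projections\<close>

abbreviation res :: "'w set \<Rightarrow> 'c \<Rightarrow> 'c set" where
  "res J x \<equiv> residue W \<Delta> \<delta> J x"

lemma mem_residue_iff: "y \<in> res J x \<longleftrightarrow> y \<in> \<Delta> \<and> \<delta> x y \<in> generate W J"
  by (simp add: residue_def)

lemma mem_residueD: "y \<in> res J x \<Longrightarrow> y \<in> \<Delta>"
  by (simp add: residue_def)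

lemma self_in_residue: "x \<in> \<Delta> \<Longrightarrow> x \<in> res J x"
  by (simp add: residue_def generate.one)

lemma delta_residue_right_coset:
  assumes J: "J \<subseteq> S" and c: "c \<in> \<Delta>" and y0: "y0 \<in> \<Delta>" and y: "y \<in> \<Delta>"
    and J_dist: "\<delta> y0 y \<in> generate W J"
  shows "\<exists>u\<in>generate W J. \<delta> c y = \<delta> c y0 \<otimes> u"
proof -
  have "\<exists>u\<in>generate W J. \<delta> c y = \<delta> c y0 \<otimes> u"
    if "set ws \<subseteq> J" "y0 \<in> \<Delta>" "\<delta> y0 y = wprod ws" for ws y0
    using that
  proof (induct ws arbitrary: y0)
    case Nil
    then have "y0 = y" using delta_eq_one_iff y by simp
    then show ?case using delta_closed[OF c y] generate.one by force
  next
    case (Cons t ts)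
    have tS: "t \<in> S" and tJ: "t \<in> J" and tsS: "set ts \<subseteq> S" using Cons(2) J by auto
    obtain x' where x': "x' \<in> \<Delta>" "\<delta> x' y0 = t" "\<delta> x' y = t \<otimes> \<delta> y0 y"
      using delta_adjacent_exists[OF Cons(3) y tS] by blast
    have "\<delta> x' y = wprod ts"
      using x'(3) Cons(4) gen_square[OF tS] gen_closed[OF tS] wprod_closed[OF tsS] by (simp add: m_assoc[symmetric])
    moreover have "set ts \<subseteq> J" using Cons(2) by simp
    ultimately obtain u where u: "u \<in> generate W J" "\<delta> c y = \<delta> c x' \<otimes> u"
      using Cons(1) x'(1) by blast
    have "\<delta> c x' = \<delta> c y0 \<otimes> t \<or> \<delta> c x' = \<delta> c y0"
      using delta_adjacent_right_cases[OF c Cons(3) x'(1) tS adjacent_sym[OF Cons(3) x'(1) tS x'(2)]] .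
    then show ?case
    proof
      assume "\<delta> c x' = \<delta> c y0 \<otimes> t"
      then have "\<delta> c y = \<delta> c y0 \<otimes> (t \<otimes> u)"
        using u gen_closed[OF tS] generate_closed[OF J] delta_closed[OF c Cons(3)] by (simp add: m_assoc)
      then show ?thesis using generate_mult[OF J generate.incl[OF tJ] u(1)] by blast
    qed (use u in auto)
  qed
  moreover obtain ws where "set ws \<subseteq> J" "wprod ws = \<delta> y0 y"
    using word_in_generate[OF J J_dist] by blast
  ultimately show ?thesis using y0 by simp
qed

lemma residue_eq:
  assumes J: "J \<subseteq> S" and x0: "x0 \<in> \<Delta>" and z: "z \<in> res J x0"
  shows "res J z = res J x0"
proof -
  have sub: "res J x' \<subseteq> res J x" if x: "x \<in> \<Delta>" and x': "x' \<in> res J x" for x x'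
  proof
    fix y assume "y \<in> res J x'"
    then have y: "y \<in> \<Delta>" "\<delta> x' y \<in> generate W J" using mem_residue_iff by auto
    obtain u where "u \<in> generate W J" "\<delta> x y = \<delta> x x' \<otimes> u"
      using delta_residue_right_coset[OF J x mem_residueD[OF x'] y(1) y(2)] by blast
    then show "y \<in> res J x" using y x' generate_mult[OF J] mem_residue_iff by auto
  qed
  have zD: "z \<in> \<Delta>" and "\<delta> x0 z \<in> generate W J" using z mem_residue_iff by auto
  then have "\<delta> z x0 \<in> generate W J" using delta_swap[OF x0 zD] generate_inv[OF J] by simp
  then have "x0 \<in> res J z" using x0 mem_residue_iff by simp
  then show ?thesis using sub[OF x0 z] sub[OF zD] by blast
qed

lemma residue_delta_left_exists:
  assumes J: "J \<subseteq> S" and b: "b \<in> \<Delta>" and r: "r \<in> \<Delta>" and v: "v \<in> generate W J"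
  shows "\<exists>b'\<in>res J b. \<delta> b' r = v \<otimes> \<delta> b r"
proof -
  have "\<exists>b'\<in>res J b. \<delta> b' r = wprod ws \<otimes> \<delta> b r" if "set ws \<subseteq> J" for ws
    using that
  proof (induct ws)
    case Nil
    then show ?case using self_in_residue[OF b] delta_closed[OF b r] by auto
  next
    case (Cons t ts)
    have tS: "t \<in> S" and tJ: "t \<in> J" and tsS: "set ts \<subseteq> S" using Cons(2) J by auto
    obtain b1 where b1: "b1 \<in> res J b" "\<delta> b1 r = wprod ts \<otimes> \<delta> b r" using Cons by auto
    have b1D: "b1 \<in> \<Delta>" using mem_residueD[OF b1(1)] .
    obtain b' where b': "b' \<in> \<Delta>" "\<delta> b' b1 = t" "\<delta> b' r = t \<otimes> \<delta> b1 r"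
      using delta_adjacent_exists[OF b1D r tS] by blast
    have "\<delta> b1 b' = t" using adjacent_sym[OF b1D b'(1) tS b'(2)] .
    then have "b' \<in> res J b1" using b'(1) mem_residue_iff generate.incl[OF tJ] by auto
    then have "b' \<in> res J b" using residue_eq[OF J b b1(1)] by simp
    moreover have "\<delta> b' r = wprod (t # ts) \<otimes> \<delta> b r"
      using b'(3) b1(2) gen_closed[OF tS] wprod_closed[OF tsS] delta_closed[OF b r] by (simp add: m_assoc)
    ultimately show ?case by blast
  qed
  moreover obtain ws where "set ws \<subseteq> J" "wprod ws = v" using word_in_generate[OF J v] by blast
  ultimately show ?thesis by blast
qed

lemma residue_delta_right_exists:
  assumes J: "J \<subseteq> S" and b: "b \<in> \<Delta>" and r: "r \<in> \<Delta>" and u: "u \<in> generate W J"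
  shows "\<exists>r'\<in>res J r. \<delta> b r' = \<delta> b r \<otimes> u"
proof -
  obtain r' where r': "r' \<in> res J r" "\<delta> r' b = inv u \<otimes> \<delta> r b"
    using residue_delta_left_exists[OF J r b generate_inv[OF J u]] by blast
  have uc: "u \<in> carrier W" using generate_closed[OF J u] .
  have "\<delta> b r' = inv (inv u \<otimes> \<delta> r b)" using delta_swap[OF mem_residueD[OF r'(1)] b] r'(2) by simp
  also have "\<dots> = inv (\<delta> r b) \<otimes> u" using uc delta_closed[OF r b] by (simp add: inv_mult_group)
  also have "\<dots> = \<delta> b r \<otimes> u" using delta_swap[OF b r] delta_closed[OF b r] by simp
  finally show ?thesis using r' by blast
qed

lemma minimal_in_right_coset_delta_minimizer:
  assumes J: "J \<subseteq> S" and c: "c \<in> \<Delta>" and x0: "x0 \<in> \<Delta>" and z: "z \<in> res J x0"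
    and min: "\<forall>y\<in>res J x0. len (\<delta> c z) \<le> len (\<delta> c y)"
  shows "minimal_in_right_coset J (\<delta> c z)"
  unfolding minimal_in_right_coset_def
proof
  fix u assume "u \<in> generate W J"
  then obtain r' where "r' \<in> res J z" "\<delta> c r' = \<delta> c z \<otimes> u"
    using residue_delta_right_exists[OF J c mem_residueD[OF z]] by blast
  then show "len (\<delta> c z) \<le> len (\<delta> c z \<otimes> u)" using min residue_eq[OF J x0 z] by metis
qed

lemma delta_gate:
  assumes J: "J \<subseteq> S" and c: "c \<in> \<Delta>" and z: "z \<in> \<Delta>" and min: "minimal_in_right_coset J (\<delta> c z)"
    and y: "y \<in> res J z"
  shows "\<delta> c y = \<delta> c z \<otimes> \<delta> z y" and "len (\<delta> c y) = len (\<delta> c z) + len (\<delta> z y)"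
proof -
  have cz: "\<delta> c z \<in> carrier W" using delta_closed[OF c z] .
  have "\<delta> c y = \<delta> c z \<otimes> wprod us" if "set us \<subseteq> J" "reduced us" "y \<in> \<Delta>" "\<delta> z y = wprod us" for us y
    using that
  proof (induct us arbitrary: y rule: rev_induct)
    case Nil
    then have "y = z" using delta_eq_one_iff[OF z] by simp
    then show ?case using cz by simp
  next
    case (snoc t us)
    have tS: "t \<in> S" and usS: "set us \<subseteq> S" and usJ: "set us \<subseteq> J" using snoc(2) J by auto
    have tc: "t \<in> carrier W" using gen_closed[OF tS] .
    have us: "reduced us" using reduced_appendD[of us "[t]"] snoc(3) by blast
    obtain y' where y': "y' \<in> \<Delta>" "\<delta> y y' = t" "\<delta> z y' = \<delta> z y \<otimes> t"
      using delta_adjacent_right_exists[OF z snoc(4) tS] by blast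
    have "\<delta> z y' = wprod us \<otimes> (t \<otimes> t)"
      using y'(3) snoc(5) usS tS tc wprod_closed[OF usS] by (simp add: wprod_append m_assoc)
    then have "\<delta> z y' = wprod us" using gen_square[OF tS] wprod_closed[OF usS] by simp
    then have IH: "\<delta> c y' = \<delta> c z \<otimes> wprod us" using snoc(1) usJ us y'(1) by blast
    have len_step: "len (\<delta> c z \<otimes> wprod vs) = len (\<delta> c z) + length vs" if "set vs \<subseteq> J" "reduced vs" for vs
      using minimal_in_right_coset_len_mult[OF J cz min wprod_in_generate[OF J that(1)]] that(2) by simp
    have prod: "\<delta> c z \<otimes> wprod (us @ [t]) = \<delta> c y' \<otimes> t"
      using IH cz usS tS tc wprod_closed[OF usS] by (simp add: wprod_append m_assoc)
    have "len (\<delta> c y' \<otimes> t) = len (\<delta> c y') + 1"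
      using len_step[OF snoc(2,3)] len_step[OF usJ us] prod IH by simp
    then have "\<delta> c y = \<delta> c y' \<otimes> t"
      using delta_adjacent_right_longer[OF c y'(1) snoc(4) tS adjacent_sym[OF y'(1) snoc(4) tS y'(2)]] by blast
    then show ?case using prod by simp
  qed
  moreover obtain us where us: "set us \<subseteq> J" "wprod us = \<delta> z y" "length us = len (\<delta> z y)"
    using reduced_word_in_generate[OF J] y mem_residue_iff by blast
  ultimately show gate: "\<delta> c y = \<delta> c z \<otimes> \<delta> z y" using J mem_residueD[OF y] by fastforce
  show "len (\<delta> c y) = len (\<delta> c z) + len (\<delta> z y)"
    using minimal_in_right_coset_len_mult[OF J cz min] y mem_residue_iff gate by simp
qed

lemma proj_residue_eqI:
  assumes J: "J \<subseteq> S" and c: "c \<in> \<Delta>" and x0: "x0 \<in> \<Delta>" and z: "z \<in> res J x0"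
    and min: "\<forall>y\<in>res J x0. len (\<delta> c z) \<le> len (\<delta> c y)"
  shows "proj S \<Delta> \<delta> (res J x0) c = z"
  unfolding proj_def
proof (rule the_equality)
  have gdist: "gdist S \<Delta> \<delta> c y = len (\<delta> c y)" if "y \<in> res J x0" for y
    using gdist_eq_len_delta[OF c mem_residueD[OF that]] .
  then show "z \<in> res J x0 \<and> (\<forall>y\<in>res J x0. gdist S \<Delta> \<delta> c z \<le> gdist S \<Delta> \<delta> c y)"
    using z min by simp
  fix y assume y: "y \<in> res J x0 \<and> (\<forall>y'\<in>res J x0. gdist S \<Delta> \<delta> c y \<le> gdist S \<Delta> \<delta> c y')"
  then have "len (\<delta> c y) \<le> len (\<delta> c z)" using z gdist by metis
  moreover have "len (\<delta> c y) = len (\<delta> c z) + len (\<delta> z y)"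
    using delta_gate(2)[OF J c mem_residueD[OF z] minimal_in_right_coset_delta_minimizer[OF J c x0 z min]]
      y residue_eq[OF J x0 z] by simp
  moreover have yD: "y \<in> \<Delta>" using y mem_residueD by blast
  ultimately have "\<delta> z y = \<one>" using len_eq_0_iff delta_closed[OF mem_residueD[OF z] yD] by simp
  then show "y = z" using delta_eq_one_iff mem_residueD[OF z] yD by blast
qed

lemma proj_residue_minimal:
  assumes J: "J \<subseteq> S" and c: "c \<in> \<Delta>" and x0: "x0 \<in> \<Delta>"
  shows "proj S \<Delta> \<delta> (res J x0) c \<in> res J x0"
    and "\<forall>y\<in>res J x0. len (\<delta> c (proj S \<Delta> \<delta> (res J x0) c)) \<le> len (\<delta> c y)"
proof -
  obtain z where "z \<in> res J x0" "\<forall>y. y \<in> res J x0 \<longrightarrow> len (\<delta> c z) \<le> len (\<delta> c y)"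
    using ex_has_least_nat[of "\<lambda>y. y \<in> res J x0" x0 "\<lambda>y. len (\<delta> c y)"] self_in_residue[OF x0] by blast
  moreover from this have "proj S \<Delta> \<delta> (res J x0) c = z" using proj_residue_eqI[OF J c x0] by blast
  ultimately show "proj S \<Delta> \<delta> (res J x0) c \<in> res J x0"
    and "\<forall>y\<in>res J x0. len (\<delta> c (proj S \<Delta> \<delta> (res J x0) c)) \<le> len (\<delta> c y)" by auto
qed

lemma minimal_in_right_coset_delta_proj:
  assumes J: "J \<subseteq> S" and c: "c \<in> \<Delta>" and x0: "x0 \<in> \<Delta>"
  shows "minimal_in_right_coset J (\<delta> c (proj S \<Delta> \<delta> (res J x0) c))"
  using minimal_in_right_coset_delta_minimizer[OF J c x0] proj_residue_minimal[OF J c x0] by blast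

lemma delta_proj_gate:
  assumes J: "J \<subseteq> S" and c: "c \<in> \<Delta>" and x0: "x0 \<in> \<Delta>" and y: "y \<in> res J x0"
  defines "p \<equiv> proj S \<Delta> \<delta> (res J x0) c"
  shows "\<delta> c y = \<delta> c p \<otimes> \<delta> p y" and "len (\<delta> c y) = len (\<delta> c p) + len (\<delta> p y)"
proof -
  have p: "p \<in> res J x0" using proj_residue_minimal(1)[OF J c x0] p_def by simp
  then have "y \<in> res J p" using y residue_eq[OF J x0] by simp
  then show "\<delta> c y = \<delta> c p \<otimes> \<delta> p y" and "len (\<delta> c y) = len (\<delta> c p) + len (\<delta> p y)"
    using delta_gate[OF J c mem_residueD[OF p]] minimal_in_right_coset_delta_proj[OF J c x0] p_def by auto
qed

abbreviation deltas :: "'c set \<Rightarrow> 'c set \<Rightarrow> 'w set" where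
  "deltas P Q \<equiv> {\<delta> x y |x y. x \<in> P \<and> y \<in> Q}"

lemma deltas_double_coset:
  assumes J: "J \<subseteq> S" and K: "K \<subseteq> S" and a: "a \<in> \<Delta>" and b: "b \<in> \<Delta>"
    and x: "x \<in> res J a" "x' \<in> res J a" and y: "y \<in> res K b" "y' \<in> res K b"
  shows "\<exists>v\<in>generate W J. \<exists>u\<in>generate W K. \<delta> x' y' = v \<otimes> \<delta> x y \<otimes> u"
proof -
  have D: "x \<in> \<Delta>" "x' \<in> \<Delta>" "y \<in> \<Delta>" "y' \<in> \<Delta>" using x y mem_residueD by auto
  have "\<delta> y y' \<in> generate W K" using y residue_eq[OF K b y(1)] mem_residue_iff by blast
  then obtain u where u: "u \<in> generate W K" "\<delta> x' y' = \<delta> x' y \<otimes> u"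
    using delta_residue_right_coset[OF K D(2) D(3) D(4)] by blast
  have "\<delta> x x' \<in> generate W J" using x residue_eq[OF J a x(1)] mem_residue_iff by blast
  then obtain v where v: "v \<in> generate W J" "\<delta> y x' = \<delta> y x \<otimes> v"
    using delta_residue_right_coset[OF J D(3) D(1) D(2)] by blast
  have vc: "v \<in> carrier W" using generate_closed[OF J v(1)] .
  have "\<delta> x' y = inv (\<delta> y x \<otimes> v)" using delta_swap[OF D(3) D(2)] v(2) by simp
  also have "\<dots> = inv v \<otimes> inv (\<delta> y x)" using vc delta_closed[OF D(3) D(1)] by (simp add: inv_mult_group)
  also have "\<dots> = inv v \<otimes> \<delta> x y" using delta_swap[OF D(1) D(3)] delta_closed[OF D(1) D(3)] by simp
  finally show ?thesis using u generate_inv[OF J v(1)] by auto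
qed

lemma deltas_len_minimal_is_minimal_in_cosets:
  assumes J: "J \<subseteq> S" and K: "K \<subseteq> S" and a: "a \<in> \<Delta>" and b: "b \<in> \<Delta>"
    and w: "w \<in> deltas (res J a) (res K b)"
    and min: "\<forall>w'\<in>deltas (res J a) (res K b). len w \<le> len w'"
  shows "minimal_in_left_coset J w" and "minimal_in_right_coset K w"
proof -
  obtain x y where xy: "x \<in> res J a" "y \<in> res K b" "w = \<delta> x y" using w by blast
  have D: "x \<in> \<Delta>" "y \<in> \<Delta>" using xy mem_residueD by auto
  show "minimal_in_left_coset J w"
    unfolding minimal_in_left_coset_def
  proof
    fix v assume "v \<in> generate W J"
    then obtain x' where "x' \<in> res J x" "\<delta> x' y = v \<otimes> w"
      using residue_delta_left_exists[OF J D] xy(3) by blast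
    then show "len w \<le> len (v \<otimes> w)" using min xy residue_eq[OF J a xy(1)] by force
  qed
  show "minimal_in_right_coset K w"
    unfolding minimal_in_right_coset_def
  proof
    fix u assume "u \<in> generate W K"
    then obtain y' where "y' \<in> res K y" "\<delta> x y' = w \<otimes> u"
      using residue_delta_right_exists[OF K D] xy(3) by blast
    then show "len w \<le> len (w \<otimes> u)" using min xy residue_eq[OF K b xy(2)] by force
  qed
qed

lemma deltas_minimal_in_cosets_unique:
  assumes J: "J \<subseteq> S" and K: "K \<subseteq> S" and a: "a \<in> \<Delta>" and b: "b \<in> \<Delta>"
    and w: "w \<in> deltas (res J a) (res K b)" "minimal_in_left_coset J w" "minimal_in_right_coset K w"
    and w': "w' \<in> deltas (res J a) (res K b)" "minimal_in_left_coset J w'" "minimal_in_right_coset K w'"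
  shows "w' = w"
proof -
  obtain x y where xy: "x \<in> res J a" "y \<in> res K b" "w = \<delta> x y" using w(1) by blast
  obtain x' y' where xy': "x' \<in> res J a" "y' \<in> res K b" "w' = \<delta> x' y'" using w'(1) by blast
  obtain v u where "v \<in> generate W J" "u \<in> generate W K" "w' = v \<otimes> w \<otimes> u"
    using deltas_double_coset[OF J K a b xy(1) xy'(1) xy(2) xy'(2)] xy(3) xy'(3) by blast
  moreover have "w \<in> carrier W" "w' \<in> carrier W" using xy xy' delta_closed mem_residueD by auto
  ultimately show ?thesis using double_coset_minimal_eq[OF J K] w w' by blast
qed

lemma min_delta_eqI:
  assumes J: "J \<subseteq> S" and K: "K \<subseteq> S" and a: "a \<in> \<Delta>" and b: "b \<in> \<Delta>"
    and w: "w \<in> deltas (res J a) (res K b)" "minimal_in_left_coset J w" "minimal_in_right_coset K w"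
  shows "min_delta W S \<delta> (res J a) (res K b) = w"
proof -
  let ?D = "deltas (res J a) (res K b)"
  have shortest_eq: "w' = w" if "w' \<in> ?D" "\<forall>v\<in>?D. len w' \<le> len v" for w'
    using deltas_minimal_in_cosets_unique[OF J K a b w that(1)]
      deltas_len_minimal_is_minimal_in_cosets[OF J K a b that] by blast
  obtain w0 where "w0 \<in> ?D" "\<forall>v. v \<in> ?D \<longrightarrow> len w0 \<le> len v"
    using ex_has_least_nat[of "\<lambda>v. v \<in> ?D" "\<delta> a b" len] self_in_residue a b by blast
  moreover from this have "w0 = w" using shortest_eq by blast
  ultimately have "w \<in> ?D \<and> (\<forall>v\<in>?D. len w \<le> len v)" by blast
  then show ?thesis
    unfolding min_delta_def using shortest_eq by (intro the_equality) blast+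
qed

lemma min_delta_mem:
  assumes J: "J \<subseteq> S" and K: "K \<subseteq> S" and a: "a \<in> \<Delta>" and b: "b \<in> \<Delta>"
  shows "min_delta W S \<delta> (res J a) (res K b) \<in> deltas (res J a) (res K b)"
proof -
  let ?D = "deltas (res J a) (res K b)"
  obtain w0 where "w0 \<in> ?D" "\<forall>v. v \<in> ?D \<longrightarrow> len w0 \<le> len v"
    using ex_has_least_nat[of "\<lambda>v. v \<in> ?D" "\<delta> a b" len] self_in_residue a b by blast
  then show ?thesis
    using min_delta_eqI[OF J K a b] deltas_len_minimal_is_minimal_in_cosets[OF J K a b] by simp
qed

lemma delta_proj_proj_eq_min_delta:
  assumes J: "J \<subseteq> S" and K: "K \<subseteq> S" and a0: "a0 \<in> \<Delta>" and b0: "b0 \<in> \<Delta>" and b: "b \<in> res K b0"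
  defines "x \<equiv> proj S \<Delta> \<delta> (res J a0) b"
  shows "\<delta> x (proj S \<Delta> \<delta> (res K b0) x) = min_delta W S \<delta> (res J a0) (res K b0)"
proof -
  define y where "y = proj S \<Delta> \<delta> (res K b0) x"
  have bD: "b \<in> \<Delta>" using mem_residueD[OF b] .
  have xA: "x \<in> res J a0" using proj_residue_minimal(1)[OF J bD a0] x_def by simp
  have xD: "x \<in> \<Delta>" using mem_residueD[OF xA] .
  have yB: "y \<in> res K b0" using proj_residue_minimal(1)[OF K xD b0] y_def by simp
  have yD: "y \<in> \<Delta>" using mem_residueD[OF yB] .
  have "minimal_in_right_coset J (\<delta> b x)"
    using minimal_in_right_coset_delta_proj[OF J bD a0] unfolding x_def .
  then have left_xb: "minimal_in_left_coset J (\<delta> x b)"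
    using minimal_in_left_coset_iff_inv[OF J delta_closed[OF xD bD]] delta_swap[OF xD bD] by simp
  have "\<delta> x b = \<delta> x y \<otimes> \<delta> y b" and "len (\<delta> x b) = len (\<delta> x y) + len (\<delta> y b)"
    using delta_proj_gate[OF K xD b0 b] unfolding y_def by simp_all
  then have left: "minimal_in_left_coset J (\<delta> x y)"
    using minimal_in_left_coset_prefix[OF J delta_closed[OF xD yD] delta_closed[OF yD bD]] left_xb by simp
  have right: "minimal_in_right_coset K (\<delta> x y)"
    using minimal_in_right_coset_delta_proj[OF K xD b0] unfolding y_def .
  have "\<delta> x y \<in> deltas (res J a0) (res K b0)" using xA yB by blast
  from min_delta_eqI[OF J K a0 b0 this left right] show ?thesis unfolding y_def by simp
qed
end

section \<open>Weyl-transitive actions\<close>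

locale weyl_transitive_action = W_building W S \<Delta> \<delta>
  for W :: "('w, 'm) monoid_scheme" (structure) and S and \<Delta> :: "'c set" and \<delta> +
  fixes G :: "('g, 'n) monoid_scheme" and \<phi> :: "'g \<Rightarrow> 'c \<Rightarrow> 'c"
  assumes group_action: "group_action G \<Delta> \<phi>"
    and type_preserving: "type_preserving G \<Delta> \<delta> \<phi>"
    and weyl_transitive: "weyl_transitive G \<Delta> \<delta> \<phi>"
begin

lemma act_closed: "g \<in> carrier G \<Longrightarrow> x \<in> \<Delta> \<Longrightarrow> \<phi> g x \<in> \<Delta>"
  using group_action.element_image[OF group_action] by blast

lemma act_image_chambers: "g \<in> carrier G \<Longrightarrow> \<phi> g ` \<Delta> = \<Delta>"
  using group_action.surj_prop[OF group_action] by blast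

lemma delta_act [simp]: "g \<in> carrier G \<Longrightarrow> x \<in> \<Delta> \<Longrightarrow> y \<in> \<Delta> \<Longrightarrow> \<delta> (\<phi> g x) (\<phi> g y) = \<delta> x y"
  using type_preserving unfolding type_preserving_def by blast

lemma weyl_transitiveD:
  "x \<in> \<Delta> \<Longrightarrow> y \<in> \<Delta> \<Longrightarrow> x' \<in> \<Delta> \<Longrightarrow> y' \<in> \<Delta> \<Longrightarrow> \<delta> x y = \<delta> x' y' \<Longrightarrow>
    \<exists>g\<in>carrier G. \<phi> g x = x' \<and> \<phi> g y = y'"
  using weyl_transitive unfolding weyl_transitive_def by blast

lemma act_image_residue:
  assumes g: "g \<in> carrier G" and x: "x \<in> \<Delta>"
  shows "\<phi> g ` res J x = res J (\<phi> g x)"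
proof
  show "\<phi> g ` res J x \<subseteq> res J (\<phi> g x)"
  proof
    fix y' assume "y' \<in> \<phi> g ` res J x"
    then obtain y where y: "y \<in> \<Delta>" "\<delta> x y \<in> generate W J" "y' = \<phi> g y"
      using mem_residue_iff by blast
    then show "y' \<in> res J (\<phi> g x)" using g x act_closed[OF g] by (simp add: mem_residue_iff)
  qed
  show "res J (\<phi> g x) \<subseteq> \<phi> g ` res J x"
  proof
    fix y' assume y': "y' \<in> res J (\<phi> g x)"
    then obtain y where y: "y \<in> \<Delta>" "y' = \<phi> g y" using act_image_chambers[OF g] mem_residueD by blast
    then have "y \<in> res J x" using y' g x by (simp add: mem_residue_iff)
    then show "y' \<in> \<phi> g ` res J x" using y(2) by blast
  qed
qed

lemma in_simplex_stabI:
  assumes J: "J \<subseteq> S" and x0: "x0 \<in> \<Delta>" and x: "x \<in> res J x0" and g: "g \<in> carrier G"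
    and gx: "\<phi> g x \<in> res J x0"
  shows "g \<in> simplex_stab G \<phi> (res J x0)"
proof -
  have "\<phi> g ` res J x0 = \<phi> g ` res J x" using residue_eq[OF J x0 x] by simp
  also have "\<dots> = res J (\<phi> g x)" using act_image_residue[OF g mem_residueD[OF x]] .
  also have "\<dots> = res J x0" using residue_eq[OF J x0 gx] .
  finally show ?thesis unfolding simplex_stab_def using g by blast
qed

lemma act_proj:
  assumes J: "J \<subseteq> S" and x0: "x0 \<in> \<Delta>" and c: "c \<in> \<Delta>" and g: "g \<in> simplex_stab G \<phi> (res J x0)"
  shows "\<phi> g (proj S \<Delta> \<delta> (res J x0) c) = proj S \<Delta> \<delta> (res J x0) (\<phi> g c)"
proof -
  let ?A = "res J x0"
  define p where "p = proj S \<Delta> \<delta> ?A c"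
  have gc: "g \<in> carrier G" and gA: "\<phi> g ` ?A = ?A" using g unfolding simplex_stab_def by auto
  note p = proj_residue_minimal[OF J c x0, folded p_def]
  have gpA: "\<phi> g p \<in> ?A" using gA p(1) by blast
  have "\<forall>y\<in>?A. len (\<delta> (\<phi> g c) (\<phi> g p)) \<le> len (\<delta> (\<phi> g c) y)"
  proof
    fix y assume "y \<in> ?A"
    obtain y0 where y0: "y0 \<in> ?A" "y = \<phi> g y0" using gA \<open>y \<in> ?A\<close> by blast
    have "len (\<delta> c p) \<le> len (\<delta> c y0)" using p(2) y0(1) by blast
    then show "len (\<delta> (\<phi> g c) (\<phi> g p)) \<le> len (\<delta> (\<phi> g c) y)"
      using y0(2) gc c mem_residueD[OF y0(1)] mem_residueD[OF p(1)] by simp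
  qed
  from proj_residue_eqI[OF J act_closed[OF gc c] x0 gpA this] show ?thesis unfolding p_def by simp
qed

lemma deltas_act_image:
  assumes g: "g \<in> carrier G" and P: "P \<subseteq> \<Delta>" and Q: "Q \<subseteq> \<Delta>"
  shows "deltas (\<phi> g ` P) (\<phi> g ` Q) = deltas P Q"
proof (intro equalityI subsetI)
  have eq: "\<delta> (\<phi> g x) (\<phi> g y) = \<delta> x y" if "x \<in> P" "y \<in> Q" for x y
    using g P Q that by (simp add: subsetD)
  fix d
  show "d \<in> deltas P Q" if d: "d \<in> deltas (\<phi> g ` P) (\<phi> g ` Q)"
  proof -
    obtain x y where "x \<in> P" "y \<in> Q" "d = \<delta> (\<phi> g x) (\<phi> g y)" using d by blast
    then show ?thesis using eq by blast
  qed
  show "d \<in> deltas (\<phi> g ` P) (\<phi> g ` Q)" if d: "d \<in> deltas P Q"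
  proof -
    obtain x y where "x \<in> P" "y \<in> Q" "d = \<delta> x y" using d by blast
    then have "d = \<delta> (\<phi> g x) (\<phi> g y)" "\<phi> g x \<in> \<phi> g ` P" "\<phi> g y \<in> \<phi> g ` Q" using eq by auto
    then show ?thesis by blast
  qed
qed

lemma stabilizers_move_pair:
  assumes J: "J \<subseteq> S" and K: "K \<subseteq> S" and a0: "a0 \<in> \<Delta>" and b0: "b0 \<in> \<Delta>"
    and x: "x \<in> res J a0" "x' \<in> res J a0" and y: "y \<in> res K b0" "y' \<in> res K b0"
    and d: "\<delta> x y = \<delta> x' y'"
  shows "\<exists>g\<in>simplex_stab G \<phi> (res J a0) \<inter> simplex_stab G \<phi> (res K b0). \<phi> g x = x' \<and> \<phi> g y = y'"
proof -
  obtain g where g: "g \<in> carrier G" "\<phi> g x = x'" "\<phi> g y = y'"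
    using weyl_transitiveD[OF mem_residueD[OF x(1)] mem_residueD[OF y(1)] mem_residueD[OF x(2)]
        mem_residueD[OF y(2)] d] by blast
  have "g \<in> simplex_stab G \<phi> (res J a0)" using in_simplex_stabI[OF J a0 x(1) g(1)] g(2) x(2) by simp
  moreover have "g \<in> simplex_stab G \<phi> (res K b0)" using in_simplex_stabI[OF K b0 y(1) g(1)] g(3) y(2) by simp
  ultimately show ?thesis using g(2,3) by blast
qed

lemma proj_set_subset_residue:
  assumes J: "J \<subseteq> S" and a0: "a0 \<in> \<Delta>"
  shows "proj_set S \<Delta> \<delta> (res J a0) (res K b0) \<subseteq> res J a0"
proof
  fix x assume "x \<in> proj_set S \<Delta> \<delta> (res J a0) (res K b0)"
  then obtain b where "b \<in> res K b0" "x = proj S \<Delta> \<delta> (res J a0) b" unfolding proj_set_def by blast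
  then show "x \<in> res J a0" using proj_residue_minimal(1)[OF J mem_residueD a0] by simp
qed

lemma proj_set_act:
  assumes J: "J \<subseteq> S" and a0: "a0 \<in> \<Delta>"
    and g: "g \<in> simplex_stab G \<phi> (res J a0) \<inter> simplex_stab G \<phi> (res K b0)"
    and x: "x \<in> proj_set S \<Delta> \<delta> (res J a0) (res K b0)"
  shows "\<phi> g x \<in> proj_set S \<Delta> \<delta> (res J a0) (res K b0)"
proof -
  obtain b where b: "b \<in> res K b0" "x = proj S \<Delta> \<delta> (res J a0) b" using x unfolding proj_set_def by blast
  have "\<phi> g x = proj S \<Delta> \<delta> (res J a0) (\<phi> g b)" using act_proj[OF J a0 mem_residueD[OF b(1)]] g b(2) by simp
  moreover have "\<phi> g b \<in> res K b0" using g b(1) unfolding simplex_stab_def by blast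
  ultimately show ?thesis unfolding proj_set_def by blast
qed

lemma acts_transitively_on_proj_set:
  assumes J: "J \<subseteq> S" and K: "K \<subseteq> S" and a0: "a0 \<in> \<Delta>" and b0: "b0 \<in> \<Delta>"
  shows "acts_transitively_on (simplex_stab G \<phi> (res J a0) \<inter> simplex_stab G \<phi> (res K b0)) \<phi>
           (proj_set S \<Delta> \<delta> (res J a0) (res K b0))"
  unfolding acts_transitively_on_def
proof (intro conjI ballI)
  fix g x
  assume "g \<in> simplex_stab G \<phi> (res J a0) \<inter> simplex_stab G \<phi> (res K b0)"
    and "x \<in> proj_set S \<Delta> \<delta> (res J a0) (res K b0)"
  then show "\<phi> g x \<in> proj_set S \<Delta> \<delta> (res J a0) (res K b0)" by (rule proj_set_act[OF J a0])
next
  fix x1 x2 assume "x1 \<in> proj_set S \<Delta> \<delta> (res J a0) (res K b0)" "x2 \<in> proj_set S \<Delta> \<delta> (res J a0) (res K b0)"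
  then obtain b1 b2 where b: "b1 \<in> res K b0" "b2 \<in> res K b0"
    and x: "x1 = proj S \<Delta> \<delta> (res J a0) b1" "x2 = proj S \<Delta> \<delta> (res J a0) b2"
    and xA: "x1 \<in> res J a0" "x2 \<in> res J a0"
    using proj_set_subset_residue[OF J a0] unfolding proj_set_def by blast
  have "proj S \<Delta> \<delta> (res K b0) x1 \<in> res K b0" "proj S \<Delta> \<delta> (res K b0) x2 \<in> res K b0"
    using proj_residue_minimal(1)[OF K _ b0] xA mem_residueD by blast+
  moreover have "\<delta> x1 (proj S \<Delta> \<delta> (res K b0) x1) = \<delta> x2 (proj S \<Delta> \<delta> (res K b0) x2)"
    using delta_proj_proj_eq_min_delta[OF J K a0 b0] b x by simp
  ultimately show "\<exists>g\<in>simplex_stab G \<phi> (res J a0) \<inter> simplex_stab G \<phi> (res K b0). \<phi> g x1 = x2"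
    using stabilizers_move_pair[OF J K a0 b0 xA] by blast
qed

lemma acts_transitively_on_min_delta_pairs:
  assumes J: "J \<subseteq> S" and K: "K \<subseteq> S" and a0: "a0 \<in> \<Delta>" and b0: "b0 \<in> \<Delta>"
  shows "acts_transitively_on (simplex_stab G \<phi> (res J a0) \<inter> simplex_stab G \<phi> (res K b0))
           (\<lambda>g (x, y). (\<phi> g x, \<phi> g y))
           {(x, y). x \<in> proj_set S \<Delta> \<delta> (res J a0) (res K b0) \<and> y \<in> proj_set S \<Delta> \<delta> (res K b0) (res J a0)
                    \<and> \<delta> x y = min_delta W S \<delta> (res J a0) (res K b0)}"
    (is "acts_transitively_on ?H ?f ?X")
  unfolding acts_transitively_on_def
proof (intro conjI ballI)
  fix g u assume g: "g \<in> ?H" and u: "u \<in> ?X"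
  obtain x y where xy: "u = (x, y)" "x \<in> proj_set S \<Delta> \<delta> (res J a0) (res K b0)"
    "y \<in> proj_set S \<Delta> \<delta> (res K b0) (res J a0)" "\<delta> x y = min_delta W S \<delta> (res J a0) (res K b0)"
    using u by blast
  have "g \<in> carrier G" using g unfolding simplex_stab_def by blast
  moreover have "x \<in> \<Delta>" "y \<in> \<Delta>"
    using proj_set_subset_residue[OF J a0] proj_set_subset_residue[OF K b0] xy(2,3) mem_residueD by blast+
  moreover have "g \<in> simplex_stab G \<phi> (res K b0) \<inter> simplex_stab G \<phi> (res J a0)" using g by blast
  ultimately show "?f g u \<in> ?X"
    using proj_set_act[OF J a0 g xy(2)] proj_set_act[OF K b0 _ xy(3)] xy by auto
next
  fix u v assume "u \<in> ?X" "v \<in> ?X"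
  then obtain x1 y1 x2 y2 where uv: "u = (x1, y1)" "v = (x2, y2)"
    and xy: "x1 \<in> proj_set S \<Delta> \<delta> (res J a0) (res K b0)" "x2 \<in> proj_set S \<Delta> \<delta> (res J a0) (res K b0)"
      "y1 \<in> proj_set S \<Delta> \<delta> (res K b0) (res J a0)" "y2 \<in> proj_set S \<Delta> \<delta> (res K b0) (res J a0)"
    and "\<delta> x1 y1 = \<delta> x2 y2"
    by auto
  moreover have "x1 \<in> res J a0" "x2 \<in> res J a0" "y1 \<in> res K b0" "y2 \<in> res K b0"
    using proj_set_subset_residue[OF J a0] proj_set_subset_residue[OF K b0] xy by blast+
  ultimately obtain g where "g \<in> ?H" "\<phi> g x1 = x2" "\<phi> g y1 = y2"
    using stabilizers_move_pair[OF J K a0 b0] by blast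
  then show "\<exists>g\<in>?H. ?f g u = v" using uv by auto
qed

lemma acts_transitively_on_residues_at_min_delta:
  assumes J: "J \<subseteq> S" and K: "K \<subseteq> S" and a0: "a0 \<in> \<Delta>" and b0: "b0 \<in> \<Delta>"
  shows "acts_transitively_on (simplex_stab G \<phi> (res K b0)) (\<lambda>g R. \<phi> g ` R)
           {R. simplex_of_type W S \<Delta> \<delta> J R \<and> min_delta W S \<delta> (res K b0) R = min_delta W S \<delta> (res K b0) (res J a0)}"
    (is "acts_transitively_on ?H ?f ?X")
  unfolding acts_transitively_on_def
proof (intro conjI ballI)
  fix h R assume h: "h \<in> ?H" and R: "R \<in> ?X"
  have hc: "h \<in> carrier G" and hB: "\<phi> h ` res K b0 = res K b0" using h unfolding simplex_stab_def by auto
  obtain x where x: "x \<in> \<Delta>" "R = res J x" and fin: "finite (generate W J)"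
    using R unfolding simplex_of_type_def by blast
  have "\<phi> h ` R = res J (\<phi> h x)" using act_image_residue[OF hc x(1)] x(2) by simp
  then have "simplex_of_type W S \<Delta> \<delta> J (\<phi> h ` R)"
    unfolding simplex_of_type_def using J fin act_closed[OF hc x(1)] by blast
  moreover have "deltas (res K b0) (\<phi> h ` R) = deltas (res K b0) R"
    using deltas_act_image[OF hc, of "res K b0" R] hB x(2) mem_residueD by auto
  then have "min_delta W S \<delta> (res K b0) (\<phi> h ` R) = min_delta W S \<delta> (res K b0) R"
    unfolding min_delta_def by simp
  ultimately show "?f h R \<in> ?X" using R by simp
next
  fix R1 R2 assume R: "R1 \<in> ?X" "R2 \<in> ?X"
  then obtain x1 x2 where x: "x1 \<in> \<Delta>" "R1 = res J x1" "x2 \<in> \<Delta>" "R2 = res J x2"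
    unfolding simplex_of_type_def by blast
  obtain b1 r1 where br1: "b1 \<in> res K b0" "r1 \<in> R1" "\<delta> b1 r1 = min_delta W S \<delta> (res K b0) (res J a0)"
    using min_delta_mem[OF K J b0 x(1)] x(2) R(1) by auto
  obtain b2 r2 where br2: "b2 \<in> res K b0" "r2 \<in> R2" "\<delta> b2 r2 = min_delta W S \<delta> (res K b0) (res J a0)"
    using min_delta_mem[OF K J b0 x(3)] x(4) R(2) by auto
  have D: "b1 \<in> \<Delta>" "r1 \<in> \<Delta>" "b2 \<in> \<Delta>" "r2 \<in> \<Delta>" using br1 br2 x mem_residueD by auto
  obtain g where gc: "g \<in> carrier G" and g: "\<phi> g b1 = b2" "\<phi> g r1 = r2"
    using weyl_transitiveD[OF D] br1(3) br2(3) by metis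
  have gB: "g \<in> ?H" using in_simplex_stabI[OF K b0 br1(1) gc] g(1) br2(1) by simp
  have "\<phi> g ` R1 = \<phi> g ` res J r1" using residue_eq[OF J x(1)] br1(2) x(2) by simp
  also have "\<dots> = res J r2" using act_image_residue[OF gc D(2)] g(2) by simp
  also have "\<dots> = R2" using residue_eq[OF J x(3)] br2(2) x(4) by simp
  finally show "\<exists>h\<in>?H. ?f h R1 = R2" using gB by blast
qed
end

theorem lemma4p1:
  fixes W :: "('w, 'm) monoid_scheme" and S :: "'w set"
    and \<Delta> :: "'c set" and \<delta> :: "'c \<Rightarrow> 'c \<Rightarrow> 'w"
    and G :: "('g, 'n) monoid_scheme" and \<phi> :: "'g \<Rightarrow> 'c \<Rightarrow> 'c"
    and J K :: "'w set" and A B :: "'c set"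
  assumes bld: "building W S \<Delta> \<delta>"
    and grp: "group G" and act: "group_action G \<Delta> \<phi>"
    and tp: "type_preserving G \<Delta> \<delta> \<phi>"
    and wt: "weyl_transitive G \<Delta> \<delta> \<phi>"
    and a: "simplex_of_type W S \<Delta> \<delta> J A"
    and b: "simplex_of_type W S \<Delta> \<delta> K B"
  shows "acts_transitively_on (simplex_stab G \<phi> B) (\<lambda>g R. \<phi> g ` R)
           {R. simplex_of_type W S \<Delta> \<delta> J R \<and> min_delta W S \<delta> B R = min_delta W S \<delta> B A}
    \<and> acts_transitively_on (simplex_stab G \<phi> A \<inter> simplex_stab G \<phi> B) \<phi> (proj_set S \<Delta> \<delta> A B)
    \<and> acts_transitively_on (simplex_stab G \<phi> A \<inter> simplex_stab G \<phi> B) \<phi> (proj_set S \<Delta> \<delta> B A)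
    \<and> acts_transitively_on (simplex_stab G \<phi> A \<inter> simplex_stab G \<phi> B) (\<lambda>g (x, y). (\<phi> g x, \<phi> g y))
           {(x, y). x \<in> proj_set S \<Delta> \<delta> A B \<and> y \<in> proj_set S \<Delta> \<delta> B A
                    \<and> \<delta> x y = min_delta W S \<delta> A B}"
proof -
  have "coxeter_system W S" using bld unfolding building_def by blast
  then have "coxeter_group W S"
    unfolding coxeter_group_def coxeter_group_axioms_def coxeter_system_def by blast
  then interpret weyl_transitive_action W S \<Delta> \<delta> G \<phi>
    using bld act tp wt by (simp add: weyl_transitive_action_def weyl_transitive_action_axioms_def
        W_building_def W_building_axioms_def)
  obtain a0 where J: "J \<subseteq> S" and a0: "a0 \<in> \<Delta>" and A: "A = residue W \<Delta> \<delta> J a0"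
    using a unfolding simplex_of_type_def by blast
  obtain b0 where K: "K \<subseteq> S" and b0: "b0 \<in> \<Delta>" and B: "B = residue W \<Delta> \<delta> K b0"
    using b unfolding simplex_of_type_def by blast
  show ?thesis
    using acts_transitively_on_residues_at_min_delta[OF J K a0 b0]
      acts_transitively_on_proj_set[OF J K a0 b0] acts_transitively_on_proj_set[OF K J b0 a0]
      acts_transitively_on_min_delta_pairs[OF J K a0 b0]
    unfolding A B by (simp add: Int_commute)
qed

end
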